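(* Let $\xi$ be a bi-conformal vector field with gauge functions $\phi,\chi$. Then \[ \mathcal L_\xi E_a=-p\,\Pi_{aq}\phi^q,\qquad \mathcal L_\xi W_a=(p-n)\,P_{aq}\chi^q, \] \[ \mathcal L_\xi T_{abc}=(\phi\,\Pi_{ar}+\chi\,P_{ar})T^r{}_{bc}, \] and, setting $A_{abc}=P_a{}^dT_{dbc}$, $B_{abc}=\Pi_a{}^dT_{dbc}$, \[ \mathcal L_\xi A^a{}_{bc}=(\chi-\phi)A^a{}_{bc},\qquad \mathcal L_\xi B^a{}_{bc}=(\phi-\chi)B^a{}_{bc}. \]
   Context: Let $V$ be an $n$-dimensional smooth manifold with a $C^\infty$ pseudo-Riemannian metric $g_{ab}$ of arbitrary signature, Levi-Civita connection $\nabla$; indices are raised and lowered with $g$. Let $P_{ab}$, $\Pi_{ab}$ be smooth symmetric tensor fields forming at each point a pair of orthogonal complementary projectors: $P_{ab}+\Pi_{ab}=g_{ab}$, $P_{aq}P^q{}_b=P_{ab}$, $\Pi_{aq}\Pi^q{}_b=\Pi_{ab}$, $P_{aq}\Pi^q{}_b=0$; let $p=P^a{}_a$ (the constant rank of $P$), with $1\le p\le n-1$. Define $M_{abc}=\nabla_bP_{ac}+\nabla_cP_{ab}-\nabla_aP_{bc}$, $E_a=M_{acb}P^{cb}$, $W_a=-M_{acb}\Pi^{cb}$, and $T_{abc}=M_{abc}+\frac{1}{n-p}W_a\Pi_{bc}-\frac1pE_aP_{bc}$. A smooth vector field $\xi$ is a bi-conformal vector field (for the pair $P,\Pi$) if there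 exist smooth functions $\phi,\chi$ (its gauge functions) with $\mathcal L_\xi P_{ab}=\phi P_{ab}$ and $\mathcal L_\xi \Pi_{ab}=\chi\Pi_{ab}$. Notation: $\phi^a=g^{ab}\partial_b\phi$, $\chi^a=g^{ab}\partial_b\chi$. *)

theory Defs
  imports "HOL-Analysis.Analysis"
begin

text \<open>The manifold is represented by an open coordinate
  domain U in real^'n (n = CARD('n)); tensor fields are given by their component
  functions U -> real, indices range over the finite type 'n.\<close>

type_synonym 'n sfun = "real^'n \<Rightarrow> real"

definition pd :: "'n::finite sfun \<Rightarrow> 'n \<Rightarrow> 'n sfun" where
  "pd f i x = deriv (\<lambda>t. f (x + t *\<^sub>R axis i 1)) 0"

fun iter_pd :: "'n::finite list \<Rightarrow> 'n sfun \<Rightarrow> 'n sfun" where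
  "iter_pd [] f = f"
| "iter_pd (i # is) f = pd (iter_pd is f) i"

definition smooth_on :: "(real^'n::finite) set \<Rightarrow> 'n sfun \<Rightarrow> bool" where
  "smooth_on U f \<longleftrightarrow> (\<forall>is. \<forall>x\<in>U. iter_pd is f differentiable (at x))"

definition gmat :: "('n::finite \<Rightarrow> 'n \<Rightarrow> 'n sfun) \<Rightarrow> real^'n \<Rightarrow> real^'n^'n" where
  "gmat g x = (\<chi> i j. g i j x)"

definition metric_on :: "(real^'n::finite) set \<Rightarrow> ('n \<Rightarrow> 'n \<Rightarrow> 'n sfun) \<Rightarrow> bool" where
  "metric_on U g \<longleftrightarrow> open U \<and> (\<forall>i j. smooth_on U (g i j))
     \<and> (\<forall>x\<in>U. \<forall>i j. g i j x = g j i x) \<and> (\<forall>x\<in>U. det (gmat g x) \<noteq> 0)"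

definition ginv :: "('n::finite \<Rightarrow> 'n \<Rightarrow> 'n sfun) \<Rightarrow> 'n \<Rightarrow> 'n \<Rightarrow> 'n sfun" where
  "ginv g i j x = matrix_inv (gmat g x) $ i $ j"

definition christoffel :: "('n::finite \<Rightarrow> 'n \<Rightarrow> 'n sfun) \<Rightarrow> 'n \<Rightarrow> 'n \<Rightarrow> 'n \<Rightarrow> 'n sfun" where
  "christoffel g k i j x = (1/2) * (\<Sum>l\<in>UNIV. ginv g k l x *
      (pd (g j l) i x + pd (g i l) j x - pd (g i j) l x))"

text \<open>nabla2 g S b a c = nabla_b S_{ac} for a covariant 2-tensor S.\<close>
definition nabla2 :: "('n::finite \<Rightarrow> 'n \<Rightarrow> 'n sfun) \<Rightarrow> ('n \<Rightarrow> 'n \<Rightarrow> 'n sfun) \<Rightarrow> 'n \<Rightarrow> 'n \<Rightarrow> 'n \<Rightarrow> 'n sfun" where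
  "nabla2 g S b a c x = pd (S a c) b x
     - (\<Sum>k\<in>UNIV. christoffel g k b a x * S k c x)
     - (\<Sum>k\<in>UNIV. christoffel g k b c x * S a k x)"

definition up2 :: "('n::finite \<Rightarrow> 'n \<Rightarrow> 'n sfun) \<Rightarrow> ('n \<Rightarrow> 'n \<Rightarrow> 'n sfun) \<Rightarrow> 'n \<Rightarrow> 'n \<Rightarrow> 'n sfun" where
  "up2 g S a b x = (\<Sum>i\<in>UNIV. \<Sum>j\<in>UNIV. ginv g a i x * ginv g b j x * S i j x)"

definition trace2 :: "('n::finite \<Rightarrow> 'n \<Rightarrow> 'n sfun) \<Rightarrow> ('n \<Rightarrow> 'n \<Rightarrow> 'n sfun) \<Rightarrow> 'n sfun" where
  "trace2 g S x = (\<Sum>a\<in>UNIV. \<Sum>b\<in>UNIV. ginv g a b x * S a b x)"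

definition grad :: "('n::finite \<Rightarrow> 'n \<Rightarrow> 'n sfun) \<Rightarrow> 'n sfun \<Rightarrow> 'n \<Rightarrow> 'n sfun" where
  "grad g f a x = (\<Sum>b\<in>UNIV. ginv g a b x * pd f b x)"

definition proj_pair :: "(real^'n::finite) set \<Rightarrow> ('n \<Rightarrow> 'n \<Rightarrow> 'n sfun) \<Rightarrow> ('n \<Rightarrow> 'n \<Rightarrow> 'n sfun) \<Rightarrow> ('n \<Rightarrow> 'n \<Rightarrow> 'n sfun) \<Rightarrow> bool" where
  "proj_pair U g P PP \<longleftrightarrow> (\<forall>a b. smooth_on U (P a b) \<and> smooth_on U (PP a b)) \<and>
    (\<forall>x\<in>U. \<forall>a b.
       P a b x = P b a x \<and> PP a b x = PP b a x \<and>
       P a b x + PP a b x = g a b x \<and>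
       (\<Sum>q\<in>UNIV. \<Sum>r\<in>UNIV. P a q x * ginv g q r x * P r b x) = P a b x \<and>
       (\<Sum>q\<in>UNIV. \<Sum>r\<in>UNIV. PP a q x * ginv g q r x * PP r b x) = PP a b x \<and>
       (\<Sum>q\<in>UNIV. \<Sum>r\<in>UNIV. P a q x * ginv g q r x * PP r b x) = 0)"

definition Mt :: "('n::finite \<Rightarrow> 'n \<Rightarrow> 'n sfun) \<Rightarrow> ('n \<Rightarrow> 'n \<Rightarrow> 'n sfun) \<Rightarrow> 'n \<Rightarrow> 'n \<Rightarrow> 'n \<Rightarrow> 'n sfun" where
  "Mt g P a b c x = nabla2 g P b a c x + nabla2 g P c a b x - nabla2 g P a b c x"

definition Ev :: "('n::finite \<Rightarrow> 'n \<Rightarrow> 'n sfun) \<Rightarrow> ('n \<Rightarrow> 'n \<Rightarrow> 'n sfun) \<Rightarrow> 'n \<Rightarrow> 'n sfun" where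
  "Ev g P a x = (\<Sum>c\<in>UNIV. \<Sum>b\<in>UNIV. Mt g P a c b x * up2 g P c b x)"

definition Wv :: "('n::finite \<Rightarrow> 'n \<Rightarrow> 'n sfun) \<Rightarrow> ('n \<Rightarrow> 'n \<Rightarrow> 'n sfun) \<Rightarrow> ('n \<Rightarrow> 'n \<Rightarrow> 'n sfun) \<Rightarrow> 'n \<Rightarrow> 'n sfun" where
  "Wv g P PP a x = - (\<Sum>c\<in>UNIV. \<Sum>b\<in>UNIV. Mt g P a c b x * up2 g PP c b x)"

definition Tt :: "('n::finite \<Rightarrow> 'n \<Rightarrow> 'n sfun) \<Rightarrow> ('n \<Rightarrow> 'n \<Rightarrow> 'n sfun) \<Rightarrow> ('n \<Rightarrow> 'n \<Rightarrow> 'n sfun) \<Rightarrow> nat \<Rightarrow> 'n \<Rightarrow> 'n \<Rightarrow> 'n \<Rightarrow> 'n sfun" where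
  "Tt g P PP p a b c x = Mt g P a b c x
     + Wv g P PP a x * PP b c x / (real CARD('n) - real p)
     - Ev g P a x * P b c x / real p"

text \<open>mixup g Q T a b c = g^{ae} Q_e{}^d T_{dbc}, i.e. A^a_{bc} (Q = P) or B^a_{bc} (Q = PP).\<close>
definition mixup :: "('n::finite \<Rightarrow> 'n \<Rightarrow> 'n sfun) \<Rightarrow> ('n \<Rightarrow> 'n \<Rightarrow> 'n sfun) \<Rightarrow> ('n \<Rightarrow> 'n \<Rightarrow> 'n \<Rightarrow> 'n sfun) \<Rightarrow> 'n \<Rightarrow> 'n \<Rightarrow> 'n \<Rightarrow> 'n sfun" where
  "mixup g Q T a b c x = (\<Sum>e\<in>UNIV. \<Sum>f\<in>UNIV. \<Sum>d\<in>UNIV.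
      ginv g a e x * Q e f x * ginv g f d x * T d b c x)"

definition lie1 :: "('n::finite \<Rightarrow> 'n sfun) \<Rightarrow> ('n \<Rightarrow> 'n sfun) \<Rightarrow> 'n \<Rightarrow> 'n sfun" where
  "lie1 xi E a x = (\<Sum>k\<in>UNIV. xi k x * pd (E a) k x) + (\<Sum>k\<in>UNIV. E k x * pd (xi k) a x)"

definition lie2 :: "('n::finite \<Rightarrow> 'n sfun) \<Rightarrow> ('n \<Rightarrow> 'n \<Rightarrow> 'n sfun) \<Rightarrow> 'n \<Rightarrow> 'n \<Rightarrow> 'n sfun" where
  "lie2 xi S a b x = (\<Sum>k\<in>UNIV. xi k x * pd (S a b) k x)
     + (\<Sum>k\<in>UNIV. S k b x * pd (xi k) a x) + (\<Sum>k\<in>UNIV. S a k x * pd (xi k) b x)"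

definition lie3 :: "('n::finite \<Rightarrow> 'n sfun) \<Rightarrow> ('n \<Rightarrow> 'n \<Rightarrow> 'n \<Rightarrow> 'n sfun) \<Rightarrow> 'n \<Rightarrow> 'n \<Rightarrow> 'n \<Rightarrow> 'n sfun" where
  "lie3 xi S a b c x = (\<Sum>k\<in>UNIV. xi k x * pd (S a b c) k x)
     + (\<Sum>k\<in>UNIV. S k b c x * pd (xi k) a x) + (\<Sum>k\<in>UNIV. S a k c x * pd (xi k) b x)
     + (\<Sum>k\<in>UNIV. S a b k x * pd (xi k) c x)"

definition lie12 :: "('n::finite \<Rightarrow> 'n sfun) \<Rightarrow> ('n \<Rightarrow> 'n \<Rightarrow> 'n \<Rightarrow> 'n sfun) \<Rightarrow> 'n \<Rightarrow> 'n \<Rightarrow> 'n \<Rightarrow> 'n sfun" where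
  "lie12 xi A a b c x = (\<Sum>k\<in>UNIV. xi k x * pd (A a b c) k x)
     - (\<Sum>k\<in>UNIV. A k b c x * pd (xi a) k x) + (\<Sum>k\<in>UNIV. A a k c x * pd (xi k) b x)
     + (\<Sum>k\<in>UNIV. A a b k x * pd (xi k) c x)"

definition biconformal :: "(real^'n::finite) set \<Rightarrow> ('n \<Rightarrow> 'n \<Rightarrow> 'n sfun) \<Rightarrow> ('n \<Rightarrow> 'n \<Rightarrow> 'n sfun)
    \<Rightarrow> ('n \<Rightarrow> 'n sfun) \<Rightarrow> 'n sfun \<Rightarrow> 'n sfun \<Rightarrow> bool" where
  "biconformal U P PP xi phi chi \<longleftrightarrow> (\<forall>k. smooth_on U (xi k)) \<and> smooth_on U phi \<and> smooth_on U chi \<and>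
     (\<forall>x\<in>U. \<forall>a b. lie2 xi P a b x = phi x * P a b x \<and> lie2 xi PP a b x = chi x * PP a b x)"

end

theory Submission
  imports Defs
begin

text \<open>
  All identities are checked pointwise in coordinates; \<open>L\<close> is the Lie derivative along \<open>\<xi>\<close>,
  \<open>PP\<close> stands for \<open>\<Pi>\<close>, and \<open>P\<^sub>a\<^sup>l\<close>, \<open>\<Pi>\<^sub>a\<^sup>l\<close> are the projectors with one index raised.
  From \<open>L P = \<phi> P\<close> and \<open>L \<Pi> = \<chi> \<Pi>\<close> one gets \<open>L g = \<phi> P + \<chi> \<Pi>\<close>, hence
  \<open>L g\<^sup>a\<^sup>b = -(\<phi> P\<^sup>a\<^sup>b + \<chi> \<Pi>\<^sup>a\<^sup>b)\<close> and \<open>L P\<^sub>a\<^sup>l = L \<Pi>\<^sub>a\<^sup>l = 0\<close>.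
  Eliminating the Christoffel symbols of \<open>g = P + \<Pi>\<close> gives
  \<open>M\<^sub>a\<^sub>b\<^sub>c = \<Pi>\<^sub>a\<^sup>l K(P)\<^sub>l\<^sub>b\<^sub>c - P\<^sub>a\<^sup>l K(\<Pi>)\<^sub>l\<^sub>b\<^sub>c\<close> with
  \<open>K(S)\<^sub>a\<^sub>b\<^sub>c = \<partial>\<^sub>b S\<^sub>a\<^sub>c + \<partial>\<^sub>c S\<^sub>a\<^sub>b - \<partial>\<^sub>a S\<^sub>b\<^sub>c\<close>.
  As \<open>L K(S) = K(L S) - 2 S \<partial>\<partial>\<xi>\<close> and the second derivatives of \<open>\<xi>\<close> are annihilated by
  \<open>\<Pi> P = 0\<close>, this yields \<open>L M = (\<phi> \<Pi> + \<chi> P)\<cdot>M - \<Pi>\<nabla>\<phi> \<otimes> P + P\<nabla>\<chi> \<otimes> \<Pi>\<close>.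
  Differentiating the projector identities shows that \<open>E\<close> is \<open>\<Pi>\<close>-valued and \<open>W\<close> is \<open>P\<close>-valued;
  contracting \<open>L M\<close> with \<open>P\<^sup>b\<^sup>c\<close> and \<open>\<Pi>\<^sup>b\<^sup>c\<close> gives \<open>L E\<close> and \<open>L W\<close>, the trace terms
  of \<open>T\<close> cancel the inhomogeneous part of \<open>L M\<close>, and \<open>A\<close>, \<open>B\<close> pick up the factors
  \<open>\<chi> - \<phi>\<close>, \<open>\<phi> - \<chi>\<close> from \<open>L P\<^sup>a\<^sup>b = -\<phi> P\<^sup>a\<^sup>b\<close>, \<open>L \<Pi>\<^sup>a\<^sup>b = -\<chi> \<Pi>\<^sup>a\<^sup>b\<close>.
  Exchanging \<open>(P, \<phi>)\<close> with \<open>(\<Pi>, \<chi>)\<close> turns \<open>M\<close> into \<open>-M\<close> and \<open>E\<close> into \<open>W\<close>,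
  so every fact is needed for \<open>P\<close> only.
\<close>

section \<open>Finite sums and matrix entries\<close>

lemma sum_rotate3: "(\<Sum>k\<in>A. \<Sum>c\<in>B. \<Sum>b\<in>C. H k c b) = (\<Sum>c\<in>B. \<Sum>b\<in>C. \<Sum>k\<in>A. H k c b)"
  by (subst sum.swap) (simp add: sum.swap[of _ A])

lemma sum_swap_inner: "(\<Sum>c\<in>A. \<Sum>b\<in>B. \<Sum>k\<in>C. F c b k) = (\<Sum>c\<in>A. \<Sum>k\<in>C. \<Sum>b\<in>B. F c b k)"
  by (rule sum.cong[OF refl]) (rule sum.swap)

lemma sum_reverse3: "(\<Sum>c\<in>A. \<Sum>b\<in>B. \<Sum>k\<in>C. F c b k) = (\<Sum>k\<in>C. \<Sum>b\<in>B. \<Sum>c\<in>A. F c b k)"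
  by (subst sum_rotate3) (rule sum.swap)

lemma contract_assoc:
  fixes A :: "'a \<Rightarrow> 'r::comm_semiring_1"
  shows "(\<Sum>r\<in>R. A r * (\<Sum>l\<in>L. B r l * C l)) = (\<Sum>l\<in>L. (\<Sum>r\<in>R. A r * B r l) * C l)"
  by (simp add: sum_distrib_left sum_distrib_right mult_ac) (rule sum.swap)

lemma contract_assoc_right:
  fixes Z :: "'a \<Rightarrow> 'r::comm_semiring_1"
  shows "(\<Sum>c\<in>I. (\<Sum>q\<in>J. A c q * Z q) * X c) = (\<Sum>q\<in>J. Z q * (\<Sum>c\<in>I. A c q * X c))"
  by (simp add: sum_distrib_left sum_distrib_right mult_ac) (rule sum.swap)

lemma contract_assoc3:
  fixes A :: "'a \<Rightarrow> 'r::comm_semiring_1"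
  shows "(\<Sum>c\<in>I. \<Sum>b\<in>J. (\<Sum>l\<in>L. A l * F l c b) * X c b) = (\<Sum>l\<in>L. A l * (\<Sum>c\<in>I. \<Sum>b\<in>J. F l c b * X c b))"
proof -
  have "(\<Sum>c\<in>I. \<Sum>b\<in>J. (\<Sum>l\<in>L. A l * F l c b) * X c b) = (\<Sum>c\<in>I. \<Sum>b\<in>J. \<Sum>l\<in>L. A l * (F l c b * X c b))"
    by (simp add: sum_distrib_right mult.assoc)
  also have "\<dots> = (\<Sum>l\<in>L. \<Sum>c\<in>I. \<Sum>b\<in>J. A l * (F l c b * X c b))"
    by (rule sum_rotate3[symmetric])
  also have "\<dots> = (\<Sum>l\<in>L. A l * (\<Sum>c\<in>I. \<Sum>b\<in>J. F l c b * X c b))"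
    by (simp add: sum_distrib_left)
  finally show ?thesis .
qed

lemma sandwich_assoc:
  fixes A :: "'a \<Rightarrow> 'r::comm_semiring_1"
  shows "(\<Sum>q\<in>I. \<Sum>r\<in>J. A q * B q r * C r) = (\<Sum>r\<in>J. (\<Sum>q\<in>I. A q * B q r) * C r)"
  by (simp add: sum_distrib_right) (rule sum.swap)

lemma sum_sandwich_pull:
  fixes A :: "'a \<Rightarrow> 'r::comm_semiring_1"
  shows "(\<Sum>m\<in>I. \<Sum>n\<in>J. A m * (\<Sum>k\<in>K. X k * E k m n) * D n) = (\<Sum>k\<in>K. X k * (\<Sum>m\<in>I. \<Sum>n\<in>J. A m * E k m n * D n))"
proof -
  have "(\<Sum>m\<in>I. \<Sum>n\<in>J. A m * (\<Sum>k\<in>K. X k * E k m n) * D n) = (\<Sum>m\<in>I. \<Sum>n\<in>J. \<Sum>k\<in>K. X k * (A m * E k m n * D n))"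
    by (simp add: sum_distrib_left sum_distrib_right mult_ac)
  also have "\<dots> = (\<Sum>k\<in>K. \<Sum>m\<in>I. \<Sum>n\<in>J. X k * (A m * E k m n * D n))"
    by (rule sum_rotate3[symmetric])
  also have "\<dots> = (\<Sum>k\<in>K. X k * (\<Sum>m\<in>I. \<Sum>n\<in>J. A m * E k m n * D n))"
    by (simp add: sum_distrib_left)
  finally show ?thesis .
qed

lemma sum_sandwich_contract_right:
  fixes A :: "'a \<Rightarrow> 'r::comm_semiring_1" and B :: "'c::finite \<Rightarrow> 'b \<Rightarrow> 'r"
  assumes "\<And>k. (\<Sum>n\<in>J. B k n * D n) = (if k = b then 1 else 0)"
  shows "(\<Sum>m\<in>I. \<Sum>n\<in>J. A m * (\<Sum>k\<in>UNIV. B k n * C m k) * D n) = (\<Sum>m\<in>I. A m * C m b)"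
proof (rule sum.cong[OF refl])
  fix m
  have "(\<Sum>n\<in>J. A m * (\<Sum>k\<in>UNIV. B k n * C m k) * D n) = (\<Sum>k\<in>UNIV. A m * C m k * (\<Sum>n\<in>J. B k n * D n))"
    by (simp add: sum_distrib_left sum_distrib_right mult_ac) (rule sum.swap)
  then show "(\<Sum>n\<in>J. A m * (\<Sum>k\<in>UNIV. B k n * C m k) * D n) = A m * C m b"
    by (simp add: assms if_distrib[of "(*) _"] cong: if_cong)
qed

lemma sum_sandwich_contract_left:
  fixes A :: "'a \<Rightarrow> 'r::comm_semiring_1" and B :: "'a \<Rightarrow> 'c::finite \<Rightarrow> 'r"
  assumes "\<And>k. (\<Sum>m\<in>I. A m * B m k) = (if a = k then 1 else 0)"
  shows "(\<Sum>m\<in>I. \<Sum>n\<in>J. A m * (\<Sum>k\<in>UNIV. B m k * C n k) * D n) = (\<Sum>n\<in>J. C n a * D n)"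
proof -
  have "(\<Sum>m\<in>I. \<Sum>n\<in>J. A m * (\<Sum>k\<in>UNIV. B m k * C n k) * D n)
     = (\<Sum>k\<in>UNIV. (\<Sum>m\<in>I. A m * B m k) * (\<Sum>n\<in>J. C n k * D n))"
    by (simp add: sum_distrib_left sum_distrib_right sum_reverse3[of _ I] mult_ac)
  then show ?thesis by (simp add: assms if_distrib[of "\<lambda>u. u * _"] cong: if_cong)
qed

lemma matrix_mult_nth: "(A ** B) $ a $ b = (\<Sum>k\<in>UNIV. A $ a $ k * B $ k $ b)"
  by (simp add: matrix_matrix_mult_def)

lemma matrix_mult3_nth: "(A ** B ** C) $ a $ b = (\<Sum>q\<in>UNIV. \<Sum>r\<in>UNIV. A $ a $ q * B $ q $ r * C $ r $ b)"
  by (simp add: matrix_matrix_mult_def sum_distrib_right) (rule sum.swap)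

lemma gmat_nth [simp]: "gmat S x $ i $ j = S i j x"
  by (simp add: gmat_def)

section \<open>Partial derivatives\<close>

lemma has_derivative_along_axis:
  fixes f :: "'n::finite sfun"
  assumes "(f has_derivative D) (at (y + t *\<^sub>R axis i 1))"
  shows "((\<lambda>s. f (y + s *\<^sub>R axis i 1)) has_real_derivative D (axis i 1)) (at t)"
proof -
  have line: "((\<lambda>s::real. y + s *\<^sub>R axis i 1) has_derivative (\<lambda>s. s *\<^sub>R axis i 1)) (at t)"
    by (auto intro!: derivative_eq_intros)
  have "linear D" using assms has_derivative_linear by blast
  then have "(\<lambda>s. D (s *\<^sub>R axis i 1)) = (*) (D (axis i 1))"
    by (simp add: linear.scaleR fun_eq_iff mult.commute)
  then show ?thesis
    using has_derivative_compose[OF line assms] by (simp add: has_field_derivative_def)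
qed

lemma pd_eq_derivative:
  fixes f :: "'n::finite sfun"
  assumes "(f has_derivative D) (at x)"
  shows "pd f i x = D (axis i 1)"
  unfolding pd_def using has_derivative_along_axis[of f D x 0 i] assms by (simp add: DERIV_imp_deriv)

lemma has_real_derivative_pd_along_axis:
  fixes f :: "'n::finite sfun"
  assumes "f differentiable (at (y + t *\<^sub>R axis i 1))"
  shows "((\<lambda>s. f (y + s *\<^sub>R axis i 1)) has_real_derivative pd f i (y + t *\<^sub>R axis i 1)) (at t)"
  using assms has_derivative_along_axis pd_eq_derivative unfolding differentiable_def by metis

lemma pd_add:
  assumes "f differentiable (at x)" "g differentiable (at x)"
  shows "pd (\<lambda>y. f y + g y) i x = pd f i x + pd g i x"
proof -
  obtain F G where F: "(f has_derivative F) (at x)" and G: "(g has_derivative G) (at x)"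
    using assms unfolding differentiable_def by blast
  show ?thesis using pd_eq_derivative[OF has_derivative_add[OF F G]] pd_eq_derivative[OF F] pd_eq_derivative[OF G] by simp
qed

lemma pd_diff:
  assumes "f differentiable (at x)" "g differentiable (at x)"
  shows "pd (\<lambda>y. f y - g y) i x = pd f i x - pd g i x"
proof -
  obtain F G where F: "(f has_derivative F) (at x)" and G: "(g has_derivative G) (at x)"
    using assms unfolding differentiable_def by blast
  show ?thesis using pd_eq_derivative[OF has_derivative_diff[OF F G]] pd_eq_derivative[OF F] pd_eq_derivative[OF G] by simp
qed

lemma pd_mult:
  assumes "f differentiable (at x)" "g differentiable (at x)"
  shows "pd (\<lambda>y. f y * g y) i x = f x * pd g i x + pd f i x * g x"
proof -
  obtain F G where F: "(f has_derivative F) (at x)" and G: "(g has_derivative G) (at x)"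
    using assms unfolding differentiable_def by blast
  show ?thesis using pd_eq_derivative[OF has_derivative_mult[OF F G]] pd_eq_derivative[OF F] pd_eq_derivative[OF G] by simp
qed

lemma pd_const: "pd (\<lambda>y. c) i x = 0"
  unfolding pd_def by simp

lemma pd_cmult: "f differentiable (at x) \<Longrightarrow> pd (\<lambda>y. c * f y) i x = c * pd f i x"
  by (simp add: pd_mult pd_const)

lemma pd_sum:
  "finite S \<Longrightarrow> (\<And>k. k \<in> S \<Longrightarrow> f k differentiable (at x)) \<Longrightarrow>
    pd (\<lambda>y. \<Sum>k\<in>S. f k y) i x = (\<Sum>k\<in>S. pd (f k) i x)"
proof (induction S rule: finite_induct)
  case empty
  then show ?case by (simp add: pd_const)
next
  case (insert a S)
  then have "(\<lambda>y. \<Sum>k\<in>S. f k y) differentiable (at x)"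
    by (auto intro!: differentiable_sum)
  with insert show ?case by (simp add: pd_add)
qed

lemma pd_sandwich:
  fixes A :: "'q::finite \<Rightarrow> 'n::finite sfun" and C :: "'r::finite \<Rightarrow> 'n sfun"
  assumes dA: "\<And>q. A q differentiable (at x)" and dB: "\<And>q r. B q r differentiable (at x)"
    and dC: "\<And>r. C r differentiable (at x)"
  shows "pd (\<lambda>y. \<Sum>q\<in>UNIV. \<Sum>r\<in>UNIV. A q y * B q r y * C r y) k x
    = (\<Sum>q\<in>UNIV. \<Sum>r\<in>UNIV. pd (A q) k x * B q r x * C r x + A q x * pd (B q r) k x * C r x
        + A q x * B q r x * pd (C r) k x)"
proof -
  have d1: "\<And>q r. (\<lambda>y. A q y * B q r y) differentiable (at x)" using dA dB by (rule differentiable_mult)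
  have d2: "\<And>q r. (\<lambda>y. A q y * B q r y * C r y) differentiable (at x)" using d1 dC by (rule differentiable_mult)
  have d3: "\<And>q. (\<lambda>y. \<Sum>r\<in>UNIV. A q y * B q r y * C r y) differentiable (at x)"
    using d2 by (auto intro: differentiable_sum)
  have "pd (\<lambda>y. \<Sum>q\<in>UNIV. \<Sum>r\<in>UNIV. A q y * B q r y * C r y) k x
      = (\<Sum>q\<in>UNIV. pd (\<lambda>y. \<Sum>r\<in>UNIV. A q y * B q r y * C r y) k x)"
    by (rule pd_sum) (simp_all add: d3)
  also have "\<dots> = (\<Sum>q\<in>UNIV. \<Sum>r\<in>UNIV. pd (\<lambda>y. A q y * B q r y * C r y) k x)"
    by (rule sum.cong[OF refl], rule pd_sum) (simp_all add: d2)
  also have "\<dots> = (\<Sum>q\<in>UNIV. \<Sum>r\<in>UNIV. (A q x * B q r x) * pd (C r) k x + (A q x * pd (B q r) k x + pd (A q) k x * B q r x) * C r x)"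
    by (simp only: pd_mult[OF d1 dC] pd_mult[OF dA dB])
  finally show ?thesis by (simp add: ring_distribs mult_ac add_ac)
qed

lemma pd_cong_open:
  fixes f g :: "'n::finite sfun"
  assumes "open U" "x \<in> U" "\<And>y. y \<in> U \<Longrightarrow> f y = g y"
  shows "pd f i x = pd g i x"
proof -
  have "open ((\<lambda>t::real. x + t *\<^sub>R axis i 1) -` U)"
    by (rule continuous_open_vimage[OF assms(1)]) (intro continuous_intros)
  then have "eventually (\<lambda>t. x + t *\<^sub>R axis i 1 \<in> U) (nhds 0)"
    using assms(2) by (auto simp: eventually_nhds)
  then have "eventually (\<lambda>t. f (x + t *\<^sub>R axis i 1) = g (x + t *\<^sub>R axis i 1)) (nhds 0)"
    by eventually_elim (simp add: assms(3))
  then show ?thesis unfolding pd_def by (rule deriv_cong_ev) simp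
qed

lemma differentiable_cong_open:
  fixes f g :: "'n::finite sfun"
  assumes "open U" "x \<in> U" "\<And>y. y \<in> U \<Longrightarrow> f y = g y" "f differentiable (at x)"
  shows "g differentiable (at x)"
  using assms has_derivative_transform_within_open unfolding differentiable_def by blast

lemma iter_pd_append: "iter_pd (is @ [i]) f = iter_pd is (pd f i)"
  by (induction "is") auto

lemma smooth_on_pd: "smooth_on U f \<Longrightarrow> smooth_on U (pd f i)"
  unfolding smooth_on_def by (metis iter_pd_append)

lemma smooth_on_imp_differentiable: "smooth_on U f \<Longrightarrow> x \<in> U \<Longrightarrow> f differentiable (at x)"
  unfolding smooth_on_def by (metis iter_pd.simps(1))

section \<open>Symmetry of second partial derivatives\<close>

lemma mixed_second_difference_mvt:
  fixes f :: "'n::finite sfun"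
  assumes h: "0 < h"
    and fd: "\<And>t. 0 \<le> t \<Longrightarrow> t \<le> h \<Longrightarrow> f differentiable (at (x + t *\<^sub>R axis i 1))"
      "\<And>t. 0 \<le> t \<Longrightarrow> t \<le> h \<Longrightarrow> f differentiable (at (x + h *\<^sub>R axis j 1 + t *\<^sub>R axis i 1))"
  obtains z where "0 < z" "z < h"
    "f (x + h *\<^sub>R axis j 1 + h *\<^sub>R axis i 1) - f (x + h *\<^sub>R axis i 1) - f (x + h *\<^sub>R axis j 1) + f x
       = h * (pd f i (x + h *\<^sub>R axis j 1 + z *\<^sub>R axis i 1) - pd f i (x + z *\<^sub>R axis i 1))"
proof -
  define y where "y = x + h *\<^sub>R axis j 1"
  define u where "u t = f (y + t *\<^sub>R axis i 1) - f (x + t *\<^sub>R axis i 1)" for t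
  have "(u has_real_derivative pd f i (y + t *\<^sub>R axis i 1) - pd f i (x + t *\<^sub>R axis i 1)) (at t)"
    if "0 \<le> t" "t \<le> h" for t
    unfolding u_def
    by (intro DERIV_diff has_real_derivative_pd_along_axis) (use fd that in \<open>simp_all add: y_def\<close>)
  from MVT2[OF h this] obtain z where "0 < z" "z < h"
      "u h - u 0 = (h - 0) * (pd f i (y + z *\<^sub>R axis i 1) - pd f i (x + z *\<^sub>R axis i 1))"
    by blast
  then show thesis by (intro that) (auto simp: u_def y_def algebra_simps)
qed

lemma mixed_second_difference_bound:
  fixes f :: "'n::finite sfun"
  assumes h: "0 < h" and e: "0 \<le> e" and fd: "\<forall>y\<in>U. f differentiable (at y)"
    and inU: "\<And>s t. 0 \<le> s \<Longrightarrow> s \<le> h \<Longrightarrow> 0 \<le> t \<Longrightarrow> t \<le> h \<Longrightarrow> x + s *\<^sub>R axis j 1 + t *\<^sub>R axis i 1 \<in> U"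
    and "linear D"
    and D: "\<And>y. norm (y - x) \<le> 2 * h \<Longrightarrow> \<bar>pd f i y - pd f i x - D (y - x)\<bar> \<le> (e/4) * norm (y - x)"
  shows "\<bar>f (x + h *\<^sub>R axis j 1 + h *\<^sub>R axis i 1) - f (x + h *\<^sub>R axis i 1) - f (x + h *\<^sub>R axis j 1) + f x
       - h * (h * D (axis j 1))\<bar> \<le> e * (h * h)"
proof -
  have near: "norm (x + s *\<^sub>R axis j 1 + t *\<^sub>R axis i 1 - x) \<le> 2 * h"
    if "0 \<le> s" "s \<le> h" "0 \<le> t" "t \<le> h" for s t
    using norm_triangle_ineq[of "s *\<^sub>R axis j 1" "t *\<^sub>R axis i 1 :: real^'n"] that by simp
  obtain z where z: "0 < z" "z < h" and mvt:
    "f (x + h *\<^sub>R axis j 1 + h *\<^sub>R axis i 1) - f (x + h *\<^sub>R axis i 1) - f (x + h *\<^sub>R axis j 1) + f x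
     = h * (pd f i (x + h *\<^sub>R axis j 1 + z *\<^sub>R axis i 1) - pd f i (x + z *\<^sub>R axis i 1))"
  proof (rule mixed_second_difference_mvt[OF h])
    show "f differentiable (at (x + t *\<^sub>R axis i 1))" if "0 \<le> t" "t \<le> h" for t
      using fd inU[of 0 t] that h by simp
    show "f differentiable (at (x + h *\<^sub>R axis j 1 + t *\<^sub>R axis i 1))" if "0 \<le> t" "t \<le> h" for t
      using fd inU[of h t] that h by simp
  qed
  have lin: "\<bar>pd f i (x + s *\<^sub>R axis j 1 + z *\<^sub>R axis i 1) - pd f i x - (s * D (axis j 1) + z * D (axis i 1))\<bar>
      \<le> e/2 * h" if "0 \<le> s" "s \<le> h" for s
  proof -
    have "\<bar>pd f i (x + s *\<^sub>R axis j 1 + z *\<^sub>R axis i 1) - pd f i x - (s * D (axis j 1) + z * D (axis i 1))\<bar>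
        \<le> (e/4) * norm (x + s *\<^sub>R axis j 1 + z *\<^sub>R axis i 1 - x)"
      using D[OF near[of s z]] that z \<open>linear D\<close> by (simp add: linear_add linear.scaleR)
    also have "\<dots> \<le> (e/4) * (2 * h)"
      using near[of s z] that z e by (intro mult_left_mono) auto
    finally show ?thesis by simp
  qed
  have "\<bar>pd f i (x + h *\<^sub>R axis j 1 + z *\<^sub>R axis i 1) - pd f i (x + z *\<^sub>R axis i 1) - h * D (axis j 1)\<bar>
      \<le> \<bar>pd f i (x + h *\<^sub>R axis j 1 + z *\<^sub>R axis i 1) - pd f i x - (h * D (axis j 1) + z * D (axis i 1))\<bar>
        + \<bar>pd f i (x + 0 *\<^sub>R axis j 1 + z *\<^sub>R axis i 1) - pd f i x - (0 * D (axis j 1) + z * D (axis i 1))\<bar>"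
    using abs_triangle_ineq4[of "pd f i (x + h *\<^sub>R axis j 1 + z *\<^sub>R axis i 1) - pd f i x - (h * D (axis j 1) + z * D (axis i 1))"
        "pd f i (x + z *\<^sub>R axis i 1) - pd f i x - z * D (axis i 1)"]
    by simp
  also have "\<dots> \<le> e/2 * h + e/2 * h" using h by (intro add_mono lin) auto
  finally have "\<bar>h * (pd f i (x + h *\<^sub>R axis j 1 + z *\<^sub>R axis i 1) - pd f i (x + z *\<^sub>R axis i 1)
      - h * D (axis j 1))\<bar> \<le> e * (h * h)"
    using h by (simp add: abs_mult)
  then show ?thesis unfolding mvt by (simp add: algebra_simps)
qed

lemma mixed_second_difference_approx:
  fixes f :: "'n::finite sfun"
  assumes U: "open U" "x \<in> U" and fd: "\<forall>y\<in>U. f differentiable (at y)"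
    and D: "(pd f i has_derivative D) (at x)" and e: "e > 0"
  shows "\<exists>\<delta>>0. \<forall>h. 0 < h \<and> h < \<delta> \<longrightarrow>
     \<bar>f (x + h *\<^sub>R axis j 1 + h *\<^sub>R axis i 1) - f (x + h *\<^sub>R axis i 1) - f (x + h *\<^sub>R axis j 1) + f x
       - h * (h * D (axis j 1))\<bar> \<le> e * (h * h)"
proof -
  obtain r where r: "r > 0" "ball x r \<subseteq> U" using U open_contains_ball by blast
  obtain d where d: "d > 0" and dD: "\<And>y. norm (y - x) < d \<Longrightarrow>
      \<bar>pd f i y - pd f i x - D (y - x)\<bar> \<le> (e/4) * norm (y - x)"
    using D e unfolding has_derivative_at_alt real_norm_def by (meson divide_pos_pos zero_less_numeral)
  define \<delta> where "\<delta> = min (r/2) (d/2)"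
  have "\<bar>f (x + h *\<^sub>R axis j 1 + h *\<^sub>R axis i 1) - f (x + h *\<^sub>R axis i 1) - f (x + h *\<^sub>R axis j 1) + f x
       - h * (h * D (axis j 1))\<bar> \<le> e * (h * h)" if h: "0 < h" "h < \<delta>" for h
  proof (rule mixed_second_difference_bound[OF h(1) less_imp_le[OF e] fd])
    show "x + s *\<^sub>R axis j 1 + t *\<^sub>R axis i 1 \<in> U" if "0 \<le> s" "s \<le> h" "0 \<le> t" "t \<le> h" for s t
      using norm_triangle_ineq[of "s *\<^sub>R axis j 1" "t *\<^sub>R axis i 1 :: real^'n"] that h r
      unfolding \<delta>_def by (intro subsetD[OF r(2)]) (simp add: dist_norm norm_minus_commute add.commute)
    show "linear D" using D has_derivative_linear by blast
    show "\<bar>pd f i y - pd f i x - D (y - x)\<bar> \<le> (e/4) * norm (y - x)" if "norm (y - x) \<le> 2 * h" for y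
      using dD that h unfolding \<delta>_def by simp
  qed
  moreover have "\<delta> > 0" using r d by (simp add: \<delta>_def)
  ultimately show ?thesis by blast
qed

lemma pd_commute:
  fixes f :: "'n::finite sfun"
  assumes U: "open U" "x \<in> U" and fd: "\<forall>y\<in>U. f differentiable (at y)"
    and "pd f i differentiable (at x)" "pd f j differentiable (at x)"
  shows "pd (pd f i) j x = pd (pd f j) i x"
proof -
  obtain Di Dj where Di: "(pd f i has_derivative Di) (at x)" and Dj: "(pd f j has_derivative Dj) (at x)"
    using assms(4,5) unfolding differentiable_def by blast
  have "\<bar>Di (axis j 1) - Dj (axis i 1)\<bar> \<le> 2 * e" if e: "e > 0" for e
  proof -
    obtain d1 where d1: "d1 > 0" "\<forall>h. 0 < h \<and> h < d1 \<longrightarrow>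
        \<bar>f (x + h *\<^sub>R axis j 1 + h *\<^sub>R axis i 1) - f (x + h *\<^sub>R axis i 1) - f (x + h *\<^sub>R axis j 1) + f x
          - h * (h * Di (axis j 1))\<bar> \<le> e * (h * h)"
      using mixed_second_difference_approx[OF U fd Di e, of j] by blast
    obtain d2 where d2: "d2 > 0" "\<forall>h. 0 < h \<and> h < d2 \<longrightarrow>
        \<bar>f (x + h *\<^sub>R axis i 1 + h *\<^sub>R axis j 1) - f (x + h *\<^sub>R axis j 1) - f (x + h *\<^sub>R axis i 1) + f x
          - h * (h * Dj (axis i 1))\<bar> \<le> e * (h * h)"
      using mixed_second_difference_approx[OF U fd Dj e, of i] by blast
    define h where "h = min d1 d2 / 2"
    have h: "0 < h" "h < d1" "h < d2" using d1 d2 by (auto simp: h_def)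
    have swap: "x + h *\<^sub>R axis i 1 + h *\<^sub>R axis j 1 = x + h *\<^sub>R axis j 1 + h *\<^sub>R axis i 1"
      by (simp add: algebra_simps)
    have "\<bar>h * (h * Di (axis j 1)) - h * (h * Dj (axis i 1))\<bar> \<le> 2 * e * (h * h)"
      using d1(2)[rule_format, of h] d2(2)[rule_format, of h] h unfolding swap by (simp add: abs_le_iff)
    moreover have "h * (h * Di (axis j 1)) - h * (h * Dj (axis i 1)) = (h * h) * (Di (axis j 1) - Dj (axis i 1))"
      by (simp add: algebra_simps)
    ultimately have "(h * h) * \<bar>Di (axis j 1) - Dj (axis i 1)\<bar> \<le> (h * h) * (2 * e)"
      by (simp add: abs_mult mult_ac)
    then show ?thesis using h by (simp add: mult_le_cancel_left_pos)
  qed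
  then have "\<bar>Di (axis j 1) - Dj (axis i 1)\<bar> \<le> 0 + e" if "e > 0" for e
    using that by (metis half_gt_zero add_0 field_sum_of_halves mult_2)
  then have "\<bar>Di (axis j 1) - Dj (axis i 1)\<bar> \<le> 0" by (rule field_le_epsilon)
  then show ?thesis using pd_eq_derivative[OF Di] pd_eq_derivative[OF Dj] by simp
qed

section \<open>The inverse metric\<close>

lemma differentiable_prod:
  fixes f :: "'i \<Rightarrow> 'a::real_normed_vector \<Rightarrow> real"
  assumes "\<And>i. i \<in> I \<Longrightarrow> f i differentiable (at x)"
  shows "(\<lambda>x. \<Prod>i\<in>I. f i x) differentiable (at x)"
proof -
  from assms have "\<forall>i\<in>I. \<exists>D. (f i has_derivative D) (at x)" unfolding differentiable_def by blast
  then obtain D where "\<forall>i\<in>I. (f i has_derivative D i) (at x)" by metis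
  then show ?thesis unfolding differentiable_def by (blast intro: has_derivative_prod)
qed

lemma differentiable_det:
  fixes F :: "'n::finite \<Rightarrow> 'n \<Rightarrow> 'm::finite sfun"
  assumes "\<And>i j. F i j differentiable (at x)"
  shows "(\<lambda>y. det (\<chi> i j. F i j y)) differentiable (at x)"
  unfolding det_def using assms
  by (auto intro!: differentiable_sum differentiable_mult differentiable_prod)

lemma gmat_matrix_inv:
  assumes "metric_on U g" "x \<in> U"
  shows "gmat g x ** matrix_inv (gmat g x) = mat 1 \<and> matrix_inv (gmat g x) ** gmat g x = mat 1"
proof -
  have "invertible (gmat g x)" using assms invertible_det_nz unfolding metric_on_def by blast
  then show ?thesis unfolding invertible_def matrix_inv_def by (rule someI_ex)
qed

lemma ginv_contract_left:
  assumes "metric_on U g" "x \<in> U"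
  shows "(\<Sum>j\<in>UNIV. ginv g i j x * g j k x) = (if i = k then 1 else 0)"
proof -
  have "(matrix_inv (gmat g x) ** gmat g x) $ i $ k = mat 1 $ i $ k" using gmat_matrix_inv[OF assms] by simp
  then show ?thesis by (simp add: matrix_matrix_mult_def mat_def ginv_def gmat_def)
qed

lemma ginv_contract_right:
  assumes "metric_on U g" "x \<in> U"
  shows "(\<Sum>j\<in>UNIV. g i j x * ginv g j k x) = (if i = k then 1 else 0)"
proof -
  have "(gmat g x ** matrix_inv (gmat g x)) $ i $ k = mat 1 $ i $ k" using gmat_matrix_inv[OF assms] by simp
  then show ?thesis by (simp add: matrix_matrix_mult_def mat_def ginv_def gmat_def)
qed

lemma ginv_sym:
  assumes "metric_on U g" "x \<in> U"
  shows "ginv g i j x = ginv g j i x"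
proof -
  let ?A = "gmat g x" and ?B = "matrix_inv (gmat g x)"
  have As: "transpose ?A = ?A" using assms unfolding metric_on_def
    by (simp add: transpose_def gmat_def vec_eq_iff)
  have tm: "transpose (mat 1 :: real^'a^'a) = mat 1" by (simp add: transpose_def mat_def vec_eq_iff)
  have "transpose ?B ** ?A = mat 1"
    using arg_cong[OF conjunct1[OF gmat_matrix_inv[OF assms]], of transpose]
    by (simp add: matrix_transpose_mul As tm)
  then have "transpose ?B = ?B"
    by (metis matrix_mul_assoc matrix_mul_lid matrix_mul_rid gmat_matrix_inv[OF assms])
  then have "transpose ?B $ j $ i = ?B $ j $ i" by simp
  then show ?thesis by (simp add: ginv_def transpose_def)
qed

lemma ginv_eq_cramer:
  assumes "metric_on U g" "x \<in> U"
  shows "ginv g i j x = det (\<chi> r l. if l = i then (if r = j then 1 else 0) else g r l x) / det (gmat g x)"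
proof -
  let ?A = "gmat g x" and ?B = "matrix_inv (gmat g x)"
  have d: "det ?A \<noteq> 0" using assms unfolding metric_on_def by blast
  have "?A *v (?B *v axis j 1) = axis j 1"
    using gmat_matrix_inv[OF assms] by (simp add: matrix_vector_mul_assoc)
  then have "?B *v axis j 1 = (\<chi> k. det(\<chi> r l. if l=k then (axis j 1 :: real^_)$r else ?A$r$l) / det ?A)"
    using cramer[OF d] by blast
  then have "(?B *v axis j 1) $ i = det(\<chi> r l. if l=i then (axis j 1 :: real^_)$r else ?A$r$l) / det ?A"
    by simp
  moreover have "(?B *v axis j 1) $ i = ?B $ i $ j" by (simp add: matrix_vector_mult_basis column_def)
  moreover have "(\<chi> r l. if l=i then (axis j 1 :: real^_)$r else ?A$r$l) = (\<chi> r l. if l = i then (if r = j then 1 else 0) else g r l x)"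
    by (simp add: axis_def gmat_def vec_eq_iff)
  ultimately show ?thesis by (simp add: ginv_def)
qed

lemma ginv_differentiable:
  assumes "metric_on U g" "x \<in> U"
  shows "ginv g i j differentiable (at x)"
proof -
  have gd: "\<And>r l. g r l differentiable (at x)" using assms smooth_on_imp_differentiable unfolding metric_on_def by blast
  have dF: "(\<lambda>y. det (\<chi> r l. if l = i then (if r = j then 1 else 0) else g r l y) / det (gmat g y)) differentiable (at x)"
  proof -
    have gd': "(\<lambda>y. if l = i then (if r = j then 1 else 0) else g r l y) differentiable (at x)" for r l
      by (cases "l = i") (simp_all add: gd)
    show ?thesis
      using assms unfolding gmat_def metric_on_def
      by (intro differentiable_divide differentiable_det gd' gd) auto
  qed
  have eq: "\<And>y. y \<in> U \<Longrightarrow> det (\<chi> r l. if l = i then (if r = j then 1 else 0) else g r l y) / det (gmat g y) = ginv g i j y"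
    using ginv_eq_cramer[OF assms(1)] by simp
  have "open U" using assms unfolding metric_on_def by blast
  then show ?thesis by (rule differentiable_cong_open[OF _ assms(2) eq dF])
qed

lemma pd_ginv:
  assumes "metric_on U g" "x \<in> U"
  shows "pd (ginv g a b) k x = - (\<Sum>m\<in>UNIV. \<Sum>n\<in>UNIV. ginv g a m x * pd (g m n) k x * ginv g n b x)"
proof -
  have U: "open U" using assms unfolding metric_on_def by blast
  have gd: "\<And>r l. g r l differentiable (at x)" using assms smooth_on_imp_differentiable unfolding metric_on_def by blast
  have gi: "\<And>r l. ginv g r l differentiable (at x)" using ginv_differentiable[OF assms] by blast
  have pd_contract: "(\<Sum>j\<in>UNIV. pd (ginv g a j) k x * g j m x) = - (\<Sum>j\<in>UNIV. ginv g a j x * pd (g j m) k x)" for m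
  proof -
    have "pd (\<lambda>y. \<Sum>j\<in>UNIV. ginv g a j y * g j m y) k x = pd (\<lambda>y. if a = m then 1 else 0) k x"
      by (rule pd_cong_open[OF U assms(2)]) (simp add: ginv_contract_left[OF assms(1)])
    then show ?thesis
      by (simp add: pd_sum pd_mult gd gi pd_const sum.distrib eq_neg_iff_add_eq_0 add.commute)
  qed
  have "pd (ginv g a b) k x = (\<Sum>m\<in>UNIV. pd (ginv g a m) k x * (if m = b then 1 else 0))"
    by (simp add: if_distrib cong: if_cong)
  also have "\<dots> = (\<Sum>m\<in>UNIV. pd (ginv g a m) k x * (\<Sum>n\<in>UNIV. g m n x * ginv g n b x))"
    by (simp add: ginv_contract_right[OF assms])
  also have "\<dots> = (\<Sum>n\<in>UNIV. (\<Sum>m\<in>UNIV. pd (ginv g a m) k x * g m n x) * ginv g n b x)"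
    by (simp add: sum_distrib_left sum_distrib_right mult.assoc) (rule sum.swap)
  also have "\<dots> = (\<Sum>n\<in>UNIV. (- (\<Sum>m\<in>UNIV. ginv g a m x * pd (g m n) k x)) * ginv g n b x)"
    by (simp add: pd_contract)
  also have "\<dots> = - (\<Sum>m\<in>UNIV. \<Sum>n\<in>UNIV. ginv g a m x * pd (g m n) k x * ginv g n b x)"
    by (simp add: sum_distrib_right sum_negf) (rule sum.swap)
  finally show ?thesis .
qed

definition raise2 :: "('n::finite \<Rightarrow> 'n \<Rightarrow> 'n sfun) \<Rightarrow> ('n \<Rightarrow> 'n \<Rightarrow> 'n sfun) \<Rightarrow> 'n \<Rightarrow> 'n \<Rightarrow> 'n sfun" where
  "raise2 g S a l x = (\<Sum>k\<in>UNIV. S a k x * ginv g k l x)"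

lemma raise2_contract_pd: "(\<Sum>l\<in>UNIV. raise2 g S a l x * pd f l x) = (\<Sum>q\<in>UNIV. S a q x * grad g f q x)"
  unfolding raise2_def grad_def by (simp add: sum_distrib_left sum_distrib_right mult_ac) (rule sum.swap)

section \<open>Lie derivatives\<close>

text \<open>Lie derivatives of a mixed tensor \<open>Q\<^sub>a\<^sup>l\<close> (first index covariant) and of a
  contravariant tensor \<open>G\<^sup>a\<^sup>b\<close>.\<close>

definition lie11 :: "('n::finite \<Rightarrow> 'n sfun) \<Rightarrow> ('n \<Rightarrow> 'n \<Rightarrow> 'n sfun) \<Rightarrow> 'n \<Rightarrow> 'n \<Rightarrow> 'n sfun" where
  "lie11 xi Q a l x = (\<Sum>k\<in>UNIV. xi k x * pd (Q a l) k x) + (\<Sum>k\<in>UNIV. Q k l x * pd (xi k) a x)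
     - (\<Sum>k\<in>UNIV. Q a k x * pd (xi l) k x)"

definition lie20 :: "('n::finite \<Rightarrow> 'n sfun) \<Rightarrow> ('n \<Rightarrow> 'n \<Rightarrow> 'n sfun) \<Rightarrow> 'n \<Rightarrow> 'n \<Rightarrow> 'n sfun" where
  "lie20 xi G a b x = (\<Sum>k\<in>UNIV. xi k x * pd (G a b) k x) - (\<Sum>k\<in>UNIV. G k b x * pd (xi a) k x)
     - (\<Sum>k\<in>UNIV. G a k x * pd (xi b) k x)"

text \<open>Leibniz rules for contractions; the suffixes give the types of the two factors
  (\<open>11\<close> mixed, \<open>20\<close> contravariant, \<open>1\<close>, \<open>2\<close>, \<open>3\<close> covariant). The two terms
  differentiating \<open>\<xi>\<close> along a contracted index (\<open>cross_terms\<close>) cancel.\<close>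

lemma lie3_contract_11_3:
  fixes Q :: "'n::finite \<Rightarrow> 'n \<Rightarrow> 'n sfun"
  assumes dQ: "\<And>a l. Q a l differentiable (at x)" and dR: "\<And>l b c. R l b c differentiable (at x)"
  shows "lie3 xi (\<lambda>a b c y. \<Sum>l\<in>UNIV. Q a l y * R l b c y) a b c x
    = (\<Sum>l\<in>UNIV. lie11 xi Q a l x * R l b c x) + (\<Sum>l\<in>UNIV. Q a l x * lie3 xi R l b c x)"
proof -
  have pd_product: "\<And>k. pd (\<lambda>y. \<Sum>l\<in>UNIV. Q a l y * R l b c y) k x
      = (\<Sum>l\<in>UNIV. Q a l x * pd (R l b c) k x) + (\<Sum>l\<in>UNIV. pd (Q a l) k x * R l b c x)"
    by (simp add: pd_sum pd_mult dQ dR sum.distrib)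
  have swaps:
    "(\<Sum>k\<in>UNIV. xi k x * (\<Sum>l\<in>UNIV. Q a l x * pd (R l b c) k x))
        = (\<Sum>l\<in>UNIV. Q a l x * (\<Sum>k\<in>UNIV. xi k x * pd (R l b c) k x))"
    "(\<Sum>k\<in>UNIV. xi k x * (\<Sum>l\<in>UNIV. pd (Q a l) k x * R l b c x))
        = (\<Sum>l\<in>UNIV. (\<Sum>k\<in>UNIV. xi k x * pd (Q a l) k x) * R l b c x)"
    "(\<Sum>k\<in>UNIV. (\<Sum>l\<in>UNIV. Q k l x * R l b c x) * pd (xi k) a x)
        = (\<Sum>l\<in>UNIV. (\<Sum>k\<in>UNIV. Q k l x * pd (xi k) a x) * R l b c x)"
    "(\<Sum>k\<in>UNIV. (\<Sum>l\<in>UNIV. Q a l x * R l k c x) * pd (xi k) b x)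
        = (\<Sum>l\<in>UNIV. Q a l x * (\<Sum>k\<in>UNIV. R l k c x * pd (xi k) b x))"
    "(\<Sum>k\<in>UNIV. (\<Sum>l\<in>UNIV. Q a l x * R l b k x) * pd (xi k) c x)
        = (\<Sum>l\<in>UNIV. Q a l x * (\<Sum>k\<in>UNIV. R l b k x * pd (xi k) c x))"
    by (simp only: sum_distrib_left sum_distrib_right, subst sum.swap, simp add: mult_ac)+
  have cross_terms:
    "(\<Sum>l\<in>UNIV. (\<Sum>k\<in>UNIV. Q a k x * pd (xi l) k x) * R l b c x)
        = (\<Sum>l\<in>UNIV. Q a l x * (\<Sum>k\<in>UNIV. R k b c x * pd (xi k) l x))"
    by (simp only: sum_distrib_left sum_distrib_right, subst sum.swap, simp add: mult_ac)
  have lhs: "lie3 xi (\<lambda>a b c y. \<Sum>l\<in>UNIV. Q a l y * R l b c y) a b c x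
     = (\<Sum>k\<in>UNIV. xi k x * (\<Sum>l\<in>UNIV. Q a l x * pd (R l b c) k x))
     + (\<Sum>k\<in>UNIV. xi k x * (\<Sum>l\<in>UNIV. pd (Q a l) k x * R l b c x))
     + (\<Sum>k\<in>UNIV. (\<Sum>l\<in>UNIV. Q k l x * R l b c x) * pd (xi k) a x)
     + (\<Sum>k\<in>UNIV. (\<Sum>l\<in>UNIV. Q a l x * R l k c x) * pd (xi k) b x)
     + (\<Sum>k\<in>UNIV. (\<Sum>l\<in>UNIV. Q a l x * R l b k x) * pd (xi k) c x)"
    unfolding lie3_def pd_product by (simp add: ring_distribs sum.distrib)
  have rhs: "(\<Sum>l\<in>UNIV. lie11 xi Q a l x * R l b c x) + (\<Sum>l\<in>UNIV. Q a l x * lie3 xi R l b c x)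
     = (\<Sum>l\<in>UNIV. (\<Sum>k\<in>UNIV. xi k x * pd (Q a l) k x) * R l b c x)
     + (\<Sum>l\<in>UNIV. (\<Sum>k\<in>UNIV. Q k l x * pd (xi k) a x) * R l b c x)
     - (\<Sum>l\<in>UNIV. (\<Sum>k\<in>UNIV. Q a k x * pd (xi l) k x) * R l b c x)
     + (\<Sum>l\<in>UNIV. Q a l x * (\<Sum>k\<in>UNIV. xi k x * pd (R l b c) k x))
     + (\<Sum>l\<in>UNIV. Q a l x * (\<Sum>k\<in>UNIV. R k b c x * pd (xi k) l x))
     + (\<Sum>l\<in>UNIV. Q a l x * (\<Sum>k\<in>UNIV. R l k c x * pd (xi k) b x))
     + (\<Sum>l\<in>UNIV. Q a l x * (\<Sum>k\<in>UNIV. R l b k x * pd (xi k) c x))"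
    unfolding lie3_def lie11_def by (simp add: ring_distribs sum.distrib sum_subtractf)
  show ?thesis using lhs rhs swaps cross_terms by linarith
qed

lemma lie11_contract_2_20:
  fixes S :: "'n::finite \<Rightarrow> 'n \<Rightarrow> 'n sfun"
  assumes dS: "\<And>a k. S a k differentiable (at x)" and dG: "\<And>k l. G k l differentiable (at x)"
  shows "lie11 xi (\<lambda>a l y. \<Sum>k\<in>UNIV. S a k y * G k l y) a l x
    = (\<Sum>k\<in>UNIV. lie2 xi S a k x * G k l x) + (\<Sum>k\<in>UNIV. S a k x * lie20 xi G k l x)"
proof -
  have pd_product: "\<And>m. pd (\<lambda>y. \<Sum>k\<in>UNIV. S a k y * G k l y) m x
      = (\<Sum>k\<in>UNIV. S a k x * pd (G k l) m x) + (\<Sum>k\<in>UNIV. pd (S a k) m x * G k l x)"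
    by (simp add: pd_sum pd_mult dS dG sum.distrib)
  have swaps:
    "(\<Sum>m\<in>UNIV. xi m x * (\<Sum>k\<in>UNIV. S a k x * pd (G k l) m x))
        = (\<Sum>k\<in>UNIV. S a k x * (\<Sum>m\<in>UNIV. xi m x * pd (G k l) m x))"
    "(\<Sum>m\<in>UNIV. xi m x * (\<Sum>k\<in>UNIV. pd (S a k) m x * G k l x))
        = (\<Sum>k\<in>UNIV. (\<Sum>m\<in>UNIV. xi m x * pd (S a k) m x) * G k l x)"
    "(\<Sum>m\<in>UNIV. (\<Sum>k\<in>UNIV. S m k x * G k l x) * pd (xi m) a x)
        = (\<Sum>k\<in>UNIV. (\<Sum>m\<in>UNIV. S m k x * pd (xi m) a x) * G k l x)"
    "(\<Sum>m\<in>UNIV. (\<Sum>k\<in>UNIV. S a k x * G k m x) * pd (xi l) m x)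
        = (\<Sum>k\<in>UNIV. S a k x * (\<Sum>m\<in>UNIV. G k m x * pd (xi l) m x))"
    by (simp only: sum_distrib_left sum_distrib_right, subst sum.swap, simp add: mult_ac)+
  have cross_terms:
    "(\<Sum>k\<in>UNIV. (\<Sum>m\<in>UNIV. S a m x * pd (xi m) k x) * G k l x)
        = (\<Sum>k\<in>UNIV. S a k x * (\<Sum>m\<in>UNIV. G m l x * pd (xi k) m x))"
    by (simp only: sum_distrib_left sum_distrib_right, subst sum.swap, simp add: mult_ac)
  have lhs: "lie11 xi (\<lambda>a l y. \<Sum>k\<in>UNIV. S a k y * G k l y) a l x
     = (\<Sum>m\<in>UNIV. xi m x * (\<Sum>k\<in>UNIV. S a k x * pd (G k l) m x))
     + (\<Sum>m\<in>UNIV. xi m x * (\<Sum>k\<in>UNIV. pd (S a k) m x * G k l x))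
     + (\<Sum>m\<in>UNIV. (\<Sum>k\<in>UNIV. S m k x * G k l x) * pd (xi m) a x)
     - (\<Sum>m\<in>UNIV. (\<Sum>k\<in>UNIV. S a k x * G k m x) * pd (xi l) m x)"
    unfolding lie11_def pd_product by (simp add: ring_distribs sum.distrib)
  have rhs: "(\<Sum>k\<in>UNIV. lie2 xi S a k x * G k l x) + (\<Sum>k\<in>UNIV. S a k x * lie20 xi G k l x)
     = (\<Sum>k\<in>UNIV. (\<Sum>m\<in>UNIV. xi m x * pd (S a k) m x) * G k l x)
     + (\<Sum>k\<in>UNIV. (\<Sum>m\<in>UNIV. S m k x * pd (xi m) a x) * G k l x)
     + (\<Sum>k\<in>UNIV. (\<Sum>m\<in>UNIV. S a m x * pd (xi m) k x) * G k l x)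
     + (\<Sum>k\<in>UNIV. S a k x * (\<Sum>m\<in>UNIV. xi m x * pd (G k l) m x))
     - (\<Sum>k\<in>UNIV. S a k x * (\<Sum>m\<in>UNIV. G m l x * pd (xi k) m x))
     - (\<Sum>k\<in>UNIV. S a k x * (\<Sum>m\<in>UNIV. G k m x * pd (xi l) m x))"
    unfolding lie2_def lie20_def by (simp add: ring_distribs sum.distrib sum_subtractf)
  show ?thesis using lhs rhs swaps cross_terms by linarith
qed

lemma lie1_contract_3_20:
  fixes M :: "'n::finite \<Rightarrow> 'n \<Rightarrow> 'n \<Rightarrow> 'n sfun"
  assumes dM: "\<And>a c b. M a c b differentiable (at x)" and dX: "\<And>c b. X c b differentiable (at x)"
  shows "lie1 xi (\<lambda>a y. \<Sum>c\<in>UNIV. \<Sum>b\<in>UNIV. M a c b y * X c b y) a x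
    = (\<Sum>c\<in>UNIV. \<Sum>b\<in>UNIV. lie3 xi M a c b x * X c b x) + (\<Sum>c\<in>UNIV. \<Sum>b\<in>UNIV. M a c b x * lie20 xi X c b x)"
proof -
  have pd_product: "\<And>k. pd (\<lambda>y. \<Sum>c\<in>UNIV. \<Sum>b\<in>UNIV. M a c b y * X c b y) k x
      = (\<Sum>c\<in>UNIV. \<Sum>b\<in>UNIV. M a c b x * pd (X c b) k x) + (\<Sum>c\<in>UNIV. \<Sum>b\<in>UNIV. pd (M a c b) k x * X c b x)"
    by (simp add: pd_sum pd_mult dM dX sum.distrib)
  have swaps:
    "(\<Sum>k\<in>UNIV. xi k x * (\<Sum>c\<in>UNIV. \<Sum>b\<in>UNIV. M a c b x * pd (X c b) k x))
        = (\<Sum>c\<in>UNIV. \<Sum>b\<in>UNIV. M a c b x * (\<Sum>k\<in>UNIV. xi k x * pd (X c b) k x))"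
    "(\<Sum>k\<in>UNIV. xi k x * (\<Sum>c\<in>UNIV. \<Sum>b\<in>UNIV. pd (M a c b) k x * X c b x))
        = (\<Sum>c\<in>UNIV. \<Sum>b\<in>UNIV. (\<Sum>k\<in>UNIV. xi k x * pd (M a c b) k x) * X c b x)"
    "(\<Sum>k\<in>UNIV. (\<Sum>c\<in>UNIV. \<Sum>b\<in>UNIV. M k c b x * X c b x) * pd (xi k) a x)
        = (\<Sum>c\<in>UNIV. \<Sum>b\<in>UNIV. (\<Sum>k\<in>UNIV. M k c b x * pd (xi k) a x) * X c b x)"
    by (simp only: sum_distrib_left sum_distrib_right, subst sum_rotate3, simp add: mult_ac)+
  have cross_terms:
    "(\<Sum>c\<in>UNIV. \<Sum>b\<in>UNIV. (\<Sum>k\<in>UNIV. M a k b x * pd (xi k) c x) * X c b x)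
        = (\<Sum>c\<in>UNIV. \<Sum>b\<in>UNIV. M a c b x * (\<Sum>k\<in>UNIV. X k b x * pd (xi c) k x))"
    "(\<Sum>c\<in>UNIV. \<Sum>b\<in>UNIV. (\<Sum>k\<in>UNIV. M a c k x * pd (xi k) b x) * X c b x)
        = (\<Sum>c\<in>UNIV. \<Sum>b\<in>UNIV. M a c b x * (\<Sum>k\<in>UNIV. X c k x * pd (xi b) k x))"
    by (simp only: sum_distrib_left sum_distrib_right, subst sum_reverse3, simp add: mult_ac)
      (simp only: sum_distrib_left sum_distrib_right, subst sum_swap_inner, simp add: mult_ac)
  have lhs: "lie1 xi (\<lambda>a y. \<Sum>c\<in>UNIV. \<Sum>b\<in>UNIV. M a c b y * X c b y) a x
     = (\<Sum>k\<in>UNIV. xi k x * (\<Sum>c\<in>UNIV. \<Sum>b\<in>UNIV. M a c b x * pd (X c b) k x))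
     + (\<Sum>k\<in>UNIV. xi k x * (\<Sum>c\<in>UNIV. \<Sum>b\<in>UNIV. pd (M a c b) k x * X c b x))
     + (\<Sum>k\<in>UNIV. (\<Sum>c\<in>UNIV. \<Sum>b\<in>UNIV. M k c b x * X c b x) * pd (xi k) a x)"
    unfolding lie1_def pd_product by (simp add: ring_distribs sum.distrib)
  have rhs: "(\<Sum>c\<in>UNIV. \<Sum>b\<in>UNIV. lie3 xi M a c b x * X c b x) + (\<Sum>c\<in>UNIV. \<Sum>b\<in>UNIV. M a c b x * lie20 xi X c b x)
     = (\<Sum>c\<in>UNIV. \<Sum>b\<in>UNIV. (\<Sum>k\<in>UNIV. xi k x * pd (M a c b) k x) * X c b x)
     + (\<Sum>c\<in>UNIV. \<Sum>b\<in>UNIV. (\<Sum>k\<in>UNIV. M k c b x * pd (xi k) a x) * X c b x)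
     + (\<Sum>c\<in>UNIV. \<Sum>b\<in>UNIV. (\<Sum>k\<in>UNIV. M a k b x * pd (xi k) c x) * X c b x)
     + (\<Sum>c\<in>UNIV. \<Sum>b\<in>UNIV. (\<Sum>k\<in>UNIV. M a c k x * pd (xi k) b x) * X c b x)
     + (\<Sum>c\<in>UNIV. \<Sum>b\<in>UNIV. M a c b x * (\<Sum>k\<in>UNIV. xi k x * pd (X c b) k x))
     - (\<Sum>c\<in>UNIV. \<Sum>b\<in>UNIV. M a c b x * (\<Sum>k\<in>UNIV. X k b x * pd (xi c) k x))
     - (\<Sum>c\<in>UNIV. \<Sum>b\<in>UNIV. M a c b x * (\<Sum>k\<in>UNIV. X c k x * pd (xi b) k x))"
    unfolding lie3_def lie20_def by (simp add: ring_distribs sum.distrib sum_subtractf)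
  show ?thesis using lhs rhs swaps cross_terms by linarith
qed

lemma lie20_contract_20_11:
  fixes G :: "'n::finite \<Rightarrow> 'n \<Rightarrow> 'n sfun"
  assumes dG: "\<And>c i. G c i differentiable (at x)" and dN: "\<And>i b. N i b differentiable (at x)"
  shows "lie20 xi (\<lambda>c b y. \<Sum>i\<in>UNIV. G c i y * N i b y) c b x
    = (\<Sum>i\<in>UNIV. lie20 xi G c i x * N i b x) + (\<Sum>i\<in>UNIV. G c i x * lie11 xi N i b x)"
proof -
  have pd_product: "\<And>k. pd (\<lambda>y. \<Sum>i\<in>UNIV. G c i y * N i b y) k x
      = (\<Sum>i\<in>UNIV. G c i x * pd (N i b) k x) + (\<Sum>i\<in>UNIV. pd (G c i) k x * N i b x)"
    by (simp add: pd_sum pd_mult dG dN sum.distrib)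
  have swaps:
    "(\<Sum>k\<in>UNIV. xi k x * (\<Sum>i\<in>UNIV. G c i x * pd (N i b) k x))
        = (\<Sum>i\<in>UNIV. G c i x * (\<Sum>k\<in>UNIV. xi k x * pd (N i b) k x))"
    "(\<Sum>k\<in>UNIV. xi k x * (\<Sum>i\<in>UNIV. pd (G c i) k x * N i b x))
        = (\<Sum>i\<in>UNIV. (\<Sum>k\<in>UNIV. xi k x * pd (G c i) k x) * N i b x)"
    "(\<Sum>k\<in>UNIV. (\<Sum>i\<in>UNIV. G k i x * N i b x) * pd (xi c) k x)
        = (\<Sum>i\<in>UNIV. (\<Sum>k\<in>UNIV. G k i x * pd (xi c) k x) * N i b x)"
    "(\<Sum>k\<in>UNIV. (\<Sum>i\<in>UNIV. G c i x * N i k x) * pd (xi b) k x)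
        = (\<Sum>i\<in>UNIV. G c i x * (\<Sum>k\<in>UNIV. N i k x * pd (xi b) k x))"
    by (simp only: sum_distrib_left sum_distrib_right, subst sum.swap, simp add: mult_ac)+
  have cross_terms:
    "(\<Sum>i\<in>UNIV. (\<Sum>k\<in>UNIV. G c k x * pd (xi i) k x) * N i b x)
        = (\<Sum>i\<in>UNIV. G c i x * (\<Sum>k\<in>UNIV. N k b x * pd (xi k) i x))"
    by (simp only: sum_distrib_left sum_distrib_right, subst sum.swap, simp add: mult_ac)
  have lhs: "lie20 xi (\<lambda>c b y. \<Sum>i\<in>UNIV. G c i y * N i b y) c b x
     = (\<Sum>k\<in>UNIV. xi k x * (\<Sum>i\<in>UNIV. G c i x * pd (N i b) k x))
     + (\<Sum>k\<in>UNIV. xi k x * (\<Sum>i\<in>UNIV. pd (G c i) k x * N i b x))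
     - (\<Sum>k\<in>UNIV. (\<Sum>i\<in>UNIV. G k i x * N i b x) * pd (xi c) k x)
     - (\<Sum>k\<in>UNIV. (\<Sum>i\<in>UNIV. G c i x * N i k x) * pd (xi b) k x)"
    unfolding lie20_def pd_product by (simp add: ring_distribs sum.distrib)
  have rhs: "(\<Sum>i\<in>UNIV. lie20 xi G c i x * N i b x) + (\<Sum>i\<in>UNIV. G c i x * lie11 xi N i b x)
     = (\<Sum>i\<in>UNIV. (\<Sum>k\<in>UNIV. xi k x * pd (G c i) k x) * N i b x)
     - (\<Sum>i\<in>UNIV. (\<Sum>k\<in>UNIV. G k i x * pd (xi c) k x) * N i b x)
     - (\<Sum>i\<in>UNIV. (\<Sum>k\<in>UNIV. G c k x * pd (xi i) k x) * N i b x)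
     + (\<Sum>i\<in>UNIV. G c i x * (\<Sum>k\<in>UNIV. xi k x * pd (N i b) k x))
     + (\<Sum>i\<in>UNIV. G c i x * (\<Sum>k\<in>UNIV. N k b x * pd (xi k) i x))
     - (\<Sum>i\<in>UNIV. G c i x * (\<Sum>k\<in>UNIV. N i k x * pd (xi b) k x))"
    unfolding lie20_def lie11_def by (simp add: ring_distribs sum.distrib sum_subtractf)
  show ?thesis using lhs rhs swaps cross_terms by linarith
qed

lemma lie12_contract_20_3:
  fixes X :: "'n::finite \<Rightarrow> 'n \<Rightarrow> 'n sfun"
  assumes dX: "\<And>a d. X a d differentiable (at x)" and dT: "\<And>d b c. T d b c differentiable (at x)"
  shows "lie12 xi (\<lambda>a b c y. \<Sum>d\<in>UNIV. X a d y * T d b c y) a b c x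
    = (\<Sum>d\<in>UNIV. lie20 xi X a d x * T d b c x) + (\<Sum>d\<in>UNIV. X a d x * lie3 xi T d b c x)"
proof -
  have pd_product: "\<And>k. pd (\<lambda>y. \<Sum>d\<in>UNIV. X a d y * T d b c y) k x
      = (\<Sum>d\<in>UNIV. X a d x * pd (T d b c) k x) + (\<Sum>d\<in>UNIV. pd (X a d) k x * T d b c x)"
    by (simp add: pd_sum pd_mult dX dT sum.distrib)
  have swaps:
    "(\<Sum>k\<in>UNIV. xi k x * (\<Sum>d\<in>UNIV. X a d x * pd (T d b c) k x))
        = (\<Sum>d\<in>UNIV. X a d x * (\<Sum>k\<in>UNIV. xi k x * pd (T d b c) k x))"
    "(\<Sum>k\<in>UNIV. xi k x * (\<Sum>d\<in>UNIV. pd (X a d) k x * T d b c x))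
        = (\<Sum>d\<in>UNIV. (\<Sum>k\<in>UNIV. xi k x * pd (X a d) k x) * T d b c x)"
    "(\<Sum>k\<in>UNIV. (\<Sum>d\<in>UNIV. X k d x * T d b c x) * pd (xi a) k x)
        = (\<Sum>d\<in>UNIV. (\<Sum>k\<in>UNIV. X k d x * pd (xi a) k x) * T d b c x)"
    "(\<Sum>k\<in>UNIV. (\<Sum>d\<in>UNIV. X a d x * T d k c x) * pd (xi k) b x)
        = (\<Sum>d\<in>UNIV. X a d x * (\<Sum>k\<in>UNIV. T d k c x * pd (xi k) b x))"
    "(\<Sum>k\<in>UNIV. (\<Sum>d\<in>UNIV. X a d x * T d b k x) * pd (xi k) c x)
        = (\<Sum>d\<in>UNIV. X a d x * (\<Sum>k\<in>UNIV. T d b k x * pd (xi k) c x))"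
    by (simp only: sum_distrib_left sum_distrib_right, subst sum.swap, simp add: mult_ac)+
  have cross_terms:
    "(\<Sum>d\<in>UNIV. (\<Sum>k\<in>UNIV. X a k x * pd (xi d) k x) * T d b c x)
        = (\<Sum>d\<in>UNIV. X a d x * (\<Sum>k\<in>UNIV. T k b c x * pd (xi k) d x))"
    by (simp only: sum_distrib_left sum_distrib_right, subst sum.swap, simp add: mult_ac)
  have lhs: "lie12 xi (\<lambda>a b c y. \<Sum>d\<in>UNIV. X a d y * T d b c y) a b c x
     = (\<Sum>k\<in>UNIV. xi k x * (\<Sum>d\<in>UNIV. X a d x * pd (T d b c) k x))
     + (\<Sum>k\<in>UNIV. xi k x * (\<Sum>d\<in>UNIV. pd (X a d) k x * T d b c x))
     - (\<Sum>k\<in>UNIV. (\<Sum>d\<in>UNIV. X k d x * T d b c x) * pd (xi a) k x)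
     + (\<Sum>k\<in>UNIV. (\<Sum>d\<in>UNIV. X a d x * T d k c x) * pd (xi k) b x)
     + (\<Sum>k\<in>UNIV. (\<Sum>d\<in>UNIV. X a d x * T d b k x) * pd (xi k) c x)"
    unfolding lie12_def pd_product by (simp add: ring_distribs sum.distrib)
  have rhs: "(\<Sum>d\<in>UNIV. lie20 xi X a d x * T d b c x) + (\<Sum>d\<in>UNIV. X a d x * lie3 xi T d b c x)
     = (\<Sum>d\<in>UNIV. (\<Sum>k\<in>UNIV. xi k x * pd (X a d) k x) * T d b c x)
     - (\<Sum>d\<in>UNIV. (\<Sum>k\<in>UNIV. X k d x * pd (xi a) k x) * T d b c x)
     - (\<Sum>d\<in>UNIV. (\<Sum>k\<in>UNIV. X a k x * pd (xi d) k x) * T d b c x)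
     + (\<Sum>d\<in>UNIV. X a d x * (\<Sum>k\<in>UNIV. xi k x * pd (T d b c) k x))
     + (\<Sum>d\<in>UNIV. X a d x * (\<Sum>k\<in>UNIV. T k b c x * pd (xi k) d x))
     + (\<Sum>d\<in>UNIV. X a d x * (\<Sum>k\<in>UNIV. T d k c x * pd (xi k) b x))
     + (\<Sum>d\<in>UNIV. X a d x * (\<Sum>k\<in>UNIV. T d b k x * pd (xi k) c x))"
    unfolding lie20_def lie3_def by (simp add: ring_distribs sum.distrib sum_subtractf)
  show ?thesis using lhs rhs swaps cross_terms by linarith
qed

lemma lie3_tensor_1_2:
  fixes W :: "'n::finite \<Rightarrow> 'n sfun"
  assumes dW: "\<And>a. W a differentiable (at x)" and dS: "\<And>b c. S b c differentiable (at x)"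
  shows "lie3 xi (\<lambda>a b c y. W a y * S b c y) a b c x = lie1 xi W a x * S b c x + W a x * lie2 xi S b c x"
proof -
  have "lie3 xi (\<lambda>a b c y. W a y * S b c y) a b c x =
     (\<Sum>k\<in>UNIV. xi k x * (W a x * pd (S b c) k x + pd (W a) k x * S b c x))
     + (\<Sum>k\<in>UNIV. W k x * S b c x * pd (xi k) a x) + (\<Sum>k\<in>UNIV. W a x * S k c x * pd (xi k) b x)
     + (\<Sum>k\<in>UNIV. W a x * S b k x * pd (xi k) c x)"
    unfolding lie3_def by (simp add: pd_mult dW dS)
  also have "\<dots> = lie1 xi W a x * S b c x + W a x * lie2 xi S b c x"
    unfolding lie1_def lie2_def
    by (simp add: ring_distribs sum.distrib sum_distrib_left sum_distrib_right mult_ac)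
  finally show ?thesis .
qed

lemma lie3_diff:
  fixes F G :: "'n::finite \<Rightarrow> 'n \<Rightarrow> 'n \<Rightarrow> 'n sfun"
  assumes "\<And>a b c. F a b c differentiable (at x)" "\<And>a b c. G a b c differentiable (at x)"
  shows "lie3 xi (\<lambda>a b c y. F a b c y - G a b c y) a b c x = lie3 xi F a b c x - lie3 xi G a b c x"
  unfolding lie3_def using assms by (simp add: pd_diff ring_distribs sum.distrib sum_subtractf)

lemma lie3_lincomb:
  fixes F G H :: "'n::finite \<Rightarrow> 'n \<Rightarrow> 'n \<Rightarrow> 'n sfun"
  assumes "\<And>a b c. F a b c differentiable (at x)" "\<And>a b c. G a b c differentiable (at x)"
    "\<And>a b c. H a b c differentiable (at x)"
  shows "lie3 xi (\<lambda>a b c y. F a b c y + r * G a b c y - s * H a b c y) a b c x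
     = lie3 xi F a b c x + r * lie3 xi G a b c x - s * lie3 xi H a b c x"
  unfolding lie3_def using assms
  by (simp add: pd_add pd_diff pd_cmult ring_distribs sum.distrib sum_subtractf sum_distrib_left mult_ac)

lemma lie1_cong:
  assumes "open U" "x \<in> U" "\<And>a y. y \<in> U \<Longrightarrow> F a y = F' a y"
  shows "lie1 xi F a x = lie1 xi F' a x"
proof -
  have "\<And>a k. pd (F a) k x = pd (F' a) k x" by (rule pd_cong_open[OF assms(1,2)]) (rule assms(3))
  then show ?thesis unfolding lie1_def using assms(3)[OF assms(2)] by simp
qed

lemma lie2_cong:
  assumes "open U" "x \<in> U" "\<And>a b y. y \<in> U \<Longrightarrow> F a b y = F' a b y"
  shows "lie2 xi F a b x = lie2 xi F' a b x"
proof -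
  have "\<And>a b k. pd (F a b) k x = pd (F' a b) k x" by (rule pd_cong_open[OF assms(1,2)]) (rule assms(3))
  then show ?thesis unfolding lie2_def using assms(3)[OF assms(2)] by simp
qed

lemma lie3_cong:
  assumes "open U" "x \<in> U" "\<And>a b c y. y \<in> U \<Longrightarrow> F a b c y = F' a b c y"
  shows "lie3 xi F a b c x = lie3 xi F' a b c x"
proof -
  have "\<And>a b c k. pd (F a b c) k x = pd (F' a b c) k x" by (rule pd_cong_open[OF assms(1,2)]) (rule assms(3))
  then show ?thesis unfolding lie3_def using assms(3)[OF assms(2)] by simp
qed

lemma lie20_cong:
  assumes "open U" "x \<in> U" "\<And>a b y. y \<in> U \<Longrightarrow> F a b y = F' a b y"
  shows "lie20 xi F a b x = lie20 xi F' a b x"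
proof -
  have "\<And>a b k. pd (F a b) k x = pd (F' a b) k x" by (rule pd_cong_open[OF assms(1,2)]) (rule assms(3))
  then show ?thesis unfolding lie20_def using assms(3)[OF assms(2)] by simp
qed

lemma lie12_cong:
  assumes "open U" "x \<in> U" "\<And>a b c y. y \<in> U \<Longrightarrow> F a b c y = F' a b c y"
  shows "lie12 xi F a b c x = lie12 xi F' a b c x"
proof -
  have "\<And>a b c k. pd (F a b c) k x = pd (F' a b c) k x" by (rule pd_cong_open[OF assms(1,2)]) (rule assms(3))
  then show ?thesis unfolding lie12_def using assms(3)[OF assms(2)] by simp
qed

lemma lie20_ginv:
  assumes met: "metric_on U g" and x: "x \<in> U"
  shows "lie20 xi (ginv g) a b x = - (\<Sum>m\<in>UNIV. \<Sum>n\<in>UNIV. ginv g a m x * lie2 xi g m n x * ginv g n b x)"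
proof -
  have "(\<Sum>m\<in>UNIV. \<Sum>n\<in>UNIV. ginv g a m x * lie2 xi g m n x * ginv g n b x)
     = (\<Sum>m\<in>UNIV. \<Sum>n\<in>UNIV. ginv g a m x * (\<Sum>k\<in>UNIV. xi k x * pd (g m n) k x) * ginv g n b x)
     + (\<Sum>m\<in>UNIV. \<Sum>n\<in>UNIV. ginv g a m x * (\<Sum>k\<in>UNIV. g k n x * pd (xi k) m x) * ginv g n b x)
     + (\<Sum>m\<in>UNIV. \<Sum>n\<in>UNIV. ginv g a m x * (\<Sum>k\<in>UNIV. g m k x * pd (xi k) n x) * ginv g n b x)"
    unfolding lie2_def by (simp add: ring_distribs sum.distrib)
  also have "\<dots> = (\<Sum>k\<in>UNIV. xi k x * (\<Sum>m\<in>UNIV. \<Sum>n\<in>UNIV. ginv g a m x * pd (g m n) k x * ginv g n b x))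
     + (\<Sum>m\<in>UNIV. ginv g a m x * pd (xi b) m x) + (\<Sum>n\<in>UNIV. pd (xi a) n x * ginv g n b x)"
    by (simp only: sum_sandwich_pull sum_sandwich_contract_right[OF ginv_contract_right[OF met x]]
        sum_sandwich_contract_left[OF ginv_contract_left[OF met x]])
  also have "\<dots> = - lie20 xi (ginv g) a b x"
    unfolding lie20_def using x by (simp add: pd_ginv[OF met x] sum_distrib_left sum_negf mult_ac)
  finally show ?thesis by simp
qed

text \<open>Twice the Christoffel symbol of the first kind of \<open>S\<close>.\<close>

definition christoffel1 :: "('n::finite \<Rightarrow> 'n \<Rightarrow> 'n sfun) \<Rightarrow> 'n \<Rightarrow> 'n \<Rightarrow> 'n \<Rightarrow> 'n sfun" where
  "christoffel1 S a b c x = pd (S a c) b x + pd (S a b) c x - pd (S b c) a x"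

lemma pd_lie2:
  assumes "\<And>a b. S a b differentiable (at x)" "\<And>a b i. pd (S a b) i differentiable (at x)"
    "\<And>k. xi k differentiable (at x)" "\<And>k i. pd (xi k) i differentiable (at x)"
  shows "pd (lie2 xi S a c) i x =
      (\<Sum>k\<in>UNIV. xi k x * pd (pd (S a c) k) i x + pd (xi k) i x * pd (S a c) k x)
    + (\<Sum>k\<in>UNIV. S k c x * pd (pd (xi k) a) i x + pd (S k c) i x * pd (xi k) a x)
    + (\<Sum>k\<in>UNIV. S a k x * pd (pd (xi k) c) i x + pd (S a k) i x * pd (xi k) c x)"
  unfolding lie2_def[abs_def] using assms by (simp add: pd_add pd_sum pd_mult)

lemma pd_christoffel1:
  assumes "\<And>a b i. pd (S a b) i differentiable (at x)"
  shows "pd (christoffel1 S a b c) k x = pd (pd (S a c) b) k x + pd (pd (S a b) c) k x - pd (pd (S b c) a) k x"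
  unfolding christoffel1_def[abs_def] using assms by (simp add: pd_add pd_diff)

lemma lie3_christoffel1:
  fixes S :: "'n::finite \<Rightarrow> 'n \<Rightarrow> 'n sfun"
  assumes U: "open U" "x \<in> U" and sym_on_U: "\<And>a b y. y \<in> U \<Longrightarrow> S a b y = S b a y"
    and smooth_S: "\<And>a b. smooth_on U (S a b)" and smooth_xi: "\<And>k. smooth_on U (xi k)"
  shows "lie3 xi (christoffel1 S) a b c x = christoffel1 (lie2 xi S) a b c x - 2 * (\<Sum>k\<in>UNIV. S a k x * pd (pd (xi k) b) c x)"
proof -
  have dS: "\<And>a b. S a b differentiable (at x)" using smooth_S smooth_on_imp_differentiable U by blast
  have dSi: "\<And>a b i. pd (S a b) i differentiable (at x)" using smooth_S smooth_on_imp_differentiable smooth_on_pd U by blast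
  have dx: "\<And>k. xi k differentiable (at x)" using smooth_xi smooth_on_imp_differentiable U by blast
  have dxi: "\<And>k i. pd (xi k) i differentiable (at x)" using smooth_xi smooth_on_imp_differentiable smooth_on_pd U by blast
  have S_commute: "\<And>a b i j. pd (pd (S a b) i) j x = pd (pd (S a b) j) i x"
    by (rule pd_commute[OF U]) (auto intro: smooth_on_imp_differentiable[OF smooth_S] dSi)
  have xi_commute: "\<And>k i j. pd (pd (xi k) i) j x = pd (pd (xi k) j) i x"
    by (rule pd_commute[OF U]) (auto intro: smooth_on_imp_differentiable[OF smooth_xi] dxi)
  have S_sym: "\<And>a b. S a b x = S b a x" using sym_on_U U by blast
  have pd_S_sym: "\<And>a b i. pd (S a b) i x = pd (S b a) i x"
    by (rule pd_cong_open[OF U]) (rule sym_on_U)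
  have pd_pd_S_sym: "\<And>a b i j. pd (pd (S a b) i) j x = pd (pd (S b a) i) j x"
  proof -
    fix a b i j
    have "\<And>y. y \<in> U \<Longrightarrow> pd (S a b) i y = pd (S b a) i y"
      by (rule pd_cong_open[OF U(1)]) (auto intro: sym_on_U)
    then show "pd (pd (S a b) i) j x = pd (pd (S b a) i) j x" by (rule pd_cong_open[OF U])
  qed
  show ?thesis
    unfolding lie3_def christoffel1_def[of "lie2 xi S"] pd_lie2[OF dS dSi dx dxi] pd_christoffel1[OF dSi]
    unfolding christoffel1_def
    by (simp add: sum.distrib ring_distribs sum_subtractf S_commute xi_commute S_sym pd_S_sym pd_pd_S_sym mult.commute)
qed

section \<open>Pairs of complementary projectors\<close>

locale biconformal_pair =
  fixes U :: "(real^'n::finite) set" and g P PP :: "'n \<Rightarrow> 'n \<Rightarrow> 'n sfun"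
    and xi :: "'n \<Rightarrow> 'n sfun" and phi chi :: "'n sfun"
  assumes metric: "metric_on U g" and projectors: "proj_pair U g P PP"
    and biconformal: "biconformal U P PP xi phi chi"
begin

abbreviation ginv_mat :: "real^'n \<Rightarrow> real^'n^'n" where
  "ginv_mat x \<equiv> matrix_inv (gmat g x)"

lemma open_U: "open U"
  using metric by (simp add: metric_on_def)

lemma smooth_P: "smooth_on U (P i j)"
  using projectors unfolding proj_pair_def by blast

lemma smooth_xi: "smooth_on U (xi k)"
  using biconformal by (simp add: biconformal_def)

lemma smooth_phi: "smooth_on U phi"
  using biconformal by (simp add: biconformal_def)

lemma differentiable_P: "x \<in> U \<Longrightarrow> P i j differentiable (at x)"
  using smooth_P smooth_on_imp_differentiable by blast

lemma differentiable_pd_P: "x \<in> U \<Longrightarrow> pd (P i j) k differentiable (at x)"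
  using smooth_P smooth_on_imp_differentiable smooth_on_pd by blast

lemma differentiable_phi: "x \<in> U \<Longrightarrow> phi differentiable (at x)"
  using smooth_phi smooth_on_imp_differentiable by blast

lemma differentiable_ginv: "x \<in> U \<Longrightarrow> ginv g i j differentiable (at x)"
  using ginv_differentiable[OF metric] by blast

lemma g_sym: "x \<in> U \<Longrightarrow> g a b x = g b a x"
  using metric by (simp add: metric_on_def)

lemma P_sym: "x \<in> U \<Longrightarrow> P a b x = P b a x"
  using projectors unfolding proj_pair_def by blast

lemma P_add_PP: "x \<in> U \<Longrightarrow> P a b x + PP a b x = g a b x"
  using projectors unfolding proj_pair_def by blast

lemma P_idem: "x \<in> U \<Longrightarrow> (\<Sum>q\<in>UNIV. \<Sum>r\<in>UNIV. P a q x * ginv g q r x * P r b x) = P a b x"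
  using projectors unfolding proj_pair_def by blast

lemma P_orth: "x \<in> U \<Longrightarrow> (\<Sum>q\<in>UNIV. \<Sum>r\<in>UNIV. P a q x * ginv g q r x * PP r b x) = 0"
  using projectors unfolding proj_pair_def by blast

lemma lie2_P: "x \<in> U \<Longrightarrow> lie2 xi P a b x = phi x * P a b x"
  using biconformal by (simp add: biconformal_def)

lemma ginv_mat_nth: "ginv_mat x $ i $ j = ginv g i j x"
  by (simp add: ginv_def)

lemma gmat_ginv_mat: "x \<in> U \<Longrightarrow> gmat g x ** ginv_mat x = mat 1"
  using gmat_matrix_inv[OF metric] by blast

lemma transpose_ginv_mat: "x \<in> U \<Longrightarrow> transpose (ginv_mat x) = ginv_mat x"
  by (simp add: vec_eq_iff transpose_def ginv_mat_nth ginv_sym[OF metric])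

lemma transpose_gmat_P: "x \<in> U \<Longrightarrow> transpose (gmat P x) = gmat P x"
  by (simp add: vec_eq_iff transpose_def P_sym)

lemma P_idem_mat: "x \<in> U \<Longrightarrow> gmat P x ** (ginv_mat x ** gmat P x) = gmat P x"
  by (simp add: vec_eq_iff matrix_mul_assoc matrix_mult3_nth ginv_mat_nth P_idem)

lemma P_orth_mat: "x \<in> U \<Longrightarrow> gmat P x ** (ginv_mat x ** gmat PP x) = 0"
  by (simp add: vec_eq_iff matrix_mul_assoc matrix_mult3_nth ginv_mat_nth P_orth)

lemma PP_orth_mat: "x \<in> U \<Longrightarrow> gmat PP x ** (ginv_mat x ** gmat P x) = 0"
proof -
  assume x: "x \<in> U"
  have PP_sym: "transpose (gmat PP x) = gmat PP x"
    using projectors x unfolding proj_pair_def by (simp add: vec_eq_iff transpose_def)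
  have "transpose (gmat P x ** (ginv_mat x ** gmat PP x)) = gmat PP x ** (ginv_mat x ** gmat P x)"
    by (simp add: matrix_transpose_mul transpose_gmat_P transpose_ginv_mat PP_sym x matrix_mul_assoc)
  then show ?thesis using P_orth_mat[OF x] by (simp add: transpose_def vec_eq_iff)
qed

lemma PP_orth: "x \<in> U \<Longrightarrow> (\<Sum>q\<in>UNIV. \<Sum>r\<in>UNIV. PP a q x * ginv g q r x * P r b x) = 0"
  using PP_orth_mat[of x] by (simp add: vec_eq_iff matrix_mul_assoc matrix_mult3_nth ginv_mat_nth)

end

sublocale biconformal_pair \<subseteq> swap: biconformal_pair U g PP P xi chi phi
proof unfold_locales
  show "metric_on U g" by (rule metric)
  have "PP a b x + P a b x = g a b x" if "x \<in> U" for a b x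
    using P_add_PP[OF that] by (simp add: add.commute)
  then show "proj_pair U g PP P"
    using projectors PP_orth unfolding proj_pair_def by blast
  show "biconformal U PP P xi chi phi"
    using biconformal unfolding biconformal_def by simp
qed

context biconformal_pair
begin

lemma P_idem_mat_right: "x \<in> U \<Longrightarrow> gmat P x ** (ginv_mat x ** (gmat P x ** X)) = gmat P x ** X"
  by (metis matrix_mul_assoc P_idem_mat)

lemma P_orth_mat_right: "x \<in> U \<Longrightarrow> gmat P x ** (ginv_mat x ** (gmat PP x ** X)) = 0"
  by (metis matrix_mul_assoc P_orth_mat times0_left)

lemma raise2_mat: "raise2 g S a l x = (gmat S x ** ginv_mat x) $ a $ l"
  by (simp add: raise2_def matrix_mult_nth ginv_mat_nth)

lemma up2_mat: "x \<in> U \<Longrightarrow> up2 g S a b x = (ginv_mat x ** gmat S x ** ginv_mat x) $ a $ b"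
  unfolding up2_def matrix_mult3_nth ginv_mat_nth using ginv_sym[OF metric] by (simp add: mult_ac)

lemma up2_sym: "x \<in> U \<Longrightarrow> (\<And>a b. S a b x = S b a x) \<Longrightarrow> up2 g S c b x = up2 g S b c x"
  unfolding up2_def by (subst sum.swap) (simp add: mult_ac)

lemma up2_eq_ginv_raise2: "x \<in> U \<Longrightarrow> up2 g S c b x = (\<Sum>i\<in>UNIV. ginv g c i x * raise2 g S i b x)"
  by (simp add: up2_mat raise2_mat matrix_mult_nth ginv_mat_nth matrix_mul_assoc[symmetric])

lemma raise2_contract_mat:
  "(\<Sum>l\<in>UNIV. raise2 g S a l x * T l b x) = (gmat S x ** ginv_mat x ** gmat T x) $ a $ b"
  by (simp add: raise2_mat matrix_mult_nth)

lemma raise2_contract_raise2_mat: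
  "(\<Sum>l\<in>UNIV. raise2 g S a l x * raise2 g T l b x) = (gmat S x ** ginv_mat x ** (gmat T x ** ginv_mat x)) $ a $ b"
  by (simp add: raise2_mat matrix_mult_nth)

lemma contract_up2_mat:
  "x \<in> U \<Longrightarrow> (\<Sum>k\<in>UNIV. S a k x * up2 g T k l x) = (gmat S x ** (ginv_mat x ** gmat T x ** ginv_mat x)) $ a $ l"
  by (simp add: up2_mat matrix_mult_nth)

lemma up2_contract_mat:
  "x \<in> U \<Longrightarrow> (\<Sum>d\<in>UNIV. up2 g S a d x * T d r x) = (ginv_mat x ** gmat S x ** ginv_mat x ** gmat T x) $ a $ r"
  by (simp add: up2_mat matrix_mult_nth)

lemma up2_contract_raise2_mat:
  "x \<in> U \<Longrightarrow> (\<Sum>i\<in>UNIV. up2 g S c i x * raise2 g T i b x)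
     = (ginv_mat x ** gmat S x ** ginv_mat x ** (gmat T x ** ginv_mat x)) $ c $ b"
  by (simp add: up2_mat raise2_mat matrix_mult_nth)

lemma differentiable_raise2_P: "x \<in> U \<Longrightarrow> raise2 g P a l differentiable (at x)"
  unfolding raise2_def[abs_def] by (auto intro!: differentiable_sum differentiable_mult differentiable_P differentiable_ginv)

lemma differentiable_up2_P: "x \<in> U \<Longrightarrow> up2 g P a b differentiable (at x)"
  unfolding up2_def[abs_def] by (auto intro!: differentiable_sum differentiable_mult differentiable_P differentiable_ginv)

text \<open>Differentiating \<open>S g\<^sup>-\<^sup>1 T = 0\<close> (or \<open>T g\<^sup>-\<^sup>1 T = T\<close>) moves the derivative off \<open>T\<close>
  onto factors that end up contracted with \<open>T X = 0\<close>.\<close>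

lemma raise2_contract_pd_orth:
  fixes S T :: "'n \<Rightarrow> 'n \<Rightarrow> 'n sfun" and X :: "'n \<Rightarrow> 'n \<Rightarrow> real"
  assumes x: "x \<in> U" and S: "\<And>a b. smooth_on U (S a b)" and T: "\<And>a b. smooth_on U (T a b)"
    and orth: "\<And>y b. y \<in> U \<Longrightarrow> (\<Sum>q\<in>UNIV. \<Sum>r\<in>UNIV. S a q y * ginv g q r y * T r b y) = 0"
    and annihilates: "\<And>r c. (\<Sum>b\<in>UNIV. T r b x * X c b) = 0"
  shows "(\<Sum>c\<in>UNIV. \<Sum>b\<in>UNIV. (\<Sum>l\<in>UNIV. raise2 g S a l x * pd (T l b) c x) * X c b) = 0"
proof -
  define Y where "Y c r = (\<Sum>q\<in>UNIV. pd (S a q) c x * ginv g q r x + S a q x * pd (ginv g q r) c x)" for c r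
  have key: "(\<Sum>l\<in>UNIV. raise2 g S a l x * pd (T l b) c x) = - (\<Sum>r\<in>UNIV. Y c r * T r b x)" for c b
  proof -
    have "pd (\<lambda>y. \<Sum>q\<in>UNIV. \<Sum>r\<in>UNIV. S a q y * ginv g q r y * T r b y) c x = pd (\<lambda>y. 0) c x"
      by (rule pd_cong_open[OF open_U x]) (simp add: orth)
    then have "(\<Sum>q\<in>UNIV. \<Sum>r\<in>UNIV. pd (S a q) c x * ginv g q r x * T r b x + S a q x * pd (ginv g q r) c x * T r b x
        + S a q x * ginv g q r x * pd (T r b) c x) = 0"
      using x by (simp add: pd_sandwich smooth_on_imp_differentiable[OF S] smooth_on_imp_differentiable[OF T] differentiable_ginv pd_const)
    moreover have "(\<Sum>q\<in>UNIV. \<Sum>r\<in>UNIV. S a q x * ginv g q r x * pd (T r b) c x) = (\<Sum>l\<in>UNIV. raise2 g S a l x * pd (T l b) c x)"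
      by (simp add: sandwich_assoc raise2_def)
    moreover have "(\<Sum>q\<in>UNIV. \<Sum>r\<in>UNIV. pd (S a q) c x * ginv g q r x * T r b x + S a q x * pd (ginv g q r) c x * T r b x)
       = (\<Sum>r\<in>UNIV. Y c r * T r b x)"
      unfolding Y_def by (simp only: sum.distrib ring_distribs sandwich_assoc)
    ultimately show ?thesis by (simp add: sum.distrib)
  qed
  have "(\<Sum>c\<in>UNIV. \<Sum>b\<in>UNIV. (\<Sum>l\<in>UNIV. raise2 g S a l x * pd (T l b) c x) * X c b)
     = - (\<Sum>c\<in>UNIV. \<Sum>b\<in>UNIV. (\<Sum>r\<in>UNIV. Y c r * T r b x) * X c b)"
    by (simp add: key sum_negf)
  also have "\<dots> = - (\<Sum>c\<in>UNIV. \<Sum>r\<in>UNIV. Y c r * (\<Sum>b\<in>UNIV. T r b x * X c b))"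
    by (simp add: contract_assoc)
  also have "\<dots> = 0" by (simp add: annihilates)
  finally show ?thesis .
qed

lemma pd_idem_contract_orth:
  fixes T :: "'n \<Rightarrow> 'n \<Rightarrow> 'n sfun" and X :: "'n \<Rightarrow> 'n \<Rightarrow> real"
  assumes x: "x \<in> U" and T: "\<And>a b. smooth_on U (T a b)"
    and idem: "\<And>y c b. y \<in> U \<Longrightarrow> (\<Sum>q\<in>UNIV. \<Sum>r\<in>UNIV. T c q y * ginv g q r y * T r b y) = T c b y"
    and annihilates_snd: "\<And>r c. (\<Sum>b\<in>UNIV. T r b x * X c b) = 0"
    and annihilates_fst: "\<And>q b. (\<Sum>c\<in>UNIV. T c q x * X c b) = 0"
  shows "(\<Sum>c\<in>UNIV. \<Sum>b\<in>UNIV. pd (T c b) l x * X c b) = 0"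
proof -
  define Y where "Y c r = (\<Sum>q\<in>UNIV. pd (T c q) l x * ginv g q r x + T c q x * pd (ginv g q r) l x)" for c r
  define Z where "Z q b = (\<Sum>r\<in>UNIV. ginv g q r x * pd (T r b) l x)" for q b
  have key: "pd (T c b) l x = (\<Sum>r\<in>UNIV. Y c r * T r b x) + (\<Sum>q\<in>UNIV. T c q x * Z q b)" for c b
  proof -
    have "pd (T c b) l x = pd (\<lambda>y. \<Sum>q\<in>UNIV. \<Sum>r\<in>UNIV. T c q y * ginv g q r y * T r b y) l x"
      by (rule pd_cong_open[OF open_U x]) (simp add: idem)
    also have "\<dots> = (\<Sum>q\<in>UNIV. \<Sum>r\<in>UNIV. pd (T c q) l x * ginv g q r x * T r b x + T c q x * pd (ginv g q r) l x * T r b x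
        + T c q x * ginv g q r x * pd (T r b) l x)"
      using x by (simp add: pd_sandwich smooth_on_imp_differentiable[OF T] differentiable_ginv)
    also have "\<dots> = (\<Sum>r\<in>UNIV. Y c r * T r b x) + (\<Sum>q\<in>UNIV. T c q x * Z q b)"
    proof -
      have "(\<Sum>q\<in>UNIV. \<Sum>r\<in>UNIV. pd (T c q) l x * ginv g q r x * T r b x + T c q x * pd (ginv g q r) l x * T r b x)
         = (\<Sum>r\<in>UNIV. Y c r * T r b x)"
        unfolding Y_def by (simp only: sum.distrib ring_distribs sandwich_assoc)
      moreover have "(\<Sum>q\<in>UNIV. \<Sum>r\<in>UNIV. T c q x * ginv g q r x * pd (T r b) l x) = (\<Sum>q\<in>UNIV. T c q x * Z q b)"
        unfolding Z_def by (simp add: sum_distrib_left mult_ac)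
      ultimately show ?thesis by (simp add: sum.distrib)
    qed
    finally show ?thesis .
  qed
  have "(\<Sum>c\<in>UNIV. \<Sum>b\<in>UNIV. pd (T c b) l x * X c b)
     = (\<Sum>c\<in>UNIV. \<Sum>b\<in>UNIV. (\<Sum>r\<in>UNIV. Y c r * T r b x) * X c b) + (\<Sum>c\<in>UNIV. \<Sum>b\<in>UNIV. (\<Sum>q\<in>UNIV. T c q x * Z q b) * X c b)"
    by (simp add: key ring_distribs sum.distrib)
  also have "(\<Sum>c\<in>UNIV. \<Sum>b\<in>UNIV. (\<Sum>r\<in>UNIV. Y c r * T r b x) * X c b) = 0"
    by (simp add: contract_assoc[symmetric] annihilates_snd)
  also have "(\<Sum>c\<in>UNIV. \<Sum>b\<in>UNIV. (\<Sum>q\<in>UNIV. T c q x * Z q b) * X c b)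
     = (\<Sum>b\<in>UNIV. \<Sum>c\<in>UNIV. (\<Sum>q\<in>UNIV. T c q x * Z q b) * X c b)" by (rule sum.swap)
  also have "\<dots> = (\<Sum>b\<in>UNIV. \<Sum>q\<in>UNIV. Z q b * (\<Sum>c\<in>UNIV. T c q x * X c b))"
    by (simp add: contract_assoc_right)
  also have "\<dots> = 0" by (simp add: annihilates_fst)
  finally show ?thesis by simp
qed

lemma raise2_contract_christoffel1_orth:
  fixes S T :: "'n \<Rightarrow> 'n \<Rightarrow> 'n sfun" and X :: "'n \<Rightarrow> 'n \<Rightarrow> real"
  assumes x: "x \<in> U" and S: "\<And>a b. smooth_on U (S a b)" and T: "\<And>a b. smooth_on U (T a b)"
    and orth: "\<And>y b. y \<in> U \<Longrightarrow> (\<Sum>q\<in>UNIV. \<Sum>r\<in>UNIV. S a q y * ginv g q r y * T r b y) = 0"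
    and idem: "\<And>y c b. y \<in> U \<Longrightarrow> (\<Sum>q\<in>UNIV. \<Sum>r\<in>UNIV. T c q y * ginv g q r y * T r b y) = T c b y"
    and X_sym: "\<And>c b. X c b = X b c"
    and annihilates_snd: "\<And>r c. (\<Sum>b\<in>UNIV. T r b x * X c b) = 0"
    and annihilates_fst: "\<And>q b. (\<Sum>c\<in>UNIV. T c q x * X c b) = 0"
  shows "(\<Sum>c\<in>UNIV. \<Sum>b\<in>UNIV. (\<Sum>l\<in>UNIV. raise2 g S a l x * christoffel1 T l c b x) * X c b) = 0"
proof -
  have deriv_c: "(\<Sum>c\<in>UNIV. \<Sum>b\<in>UNIV. (\<Sum>l\<in>UNIV. raise2 g S a l x * pd (T l b) c x) * X c b) = 0"
    by (rule raise2_contract_pd_orth[where S=S and T=T and X=X, OF x S T orth annihilates_snd])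
  have deriv_b: "(\<Sum>c\<in>UNIV. \<Sum>b\<in>UNIV. (\<Sum>l\<in>UNIV. raise2 g S a l x * pd (T l c) b x) * X c b) = 0"
  proof -
    have "(\<Sum>c\<in>UNIV. \<Sum>b\<in>UNIV. (\<Sum>l\<in>UNIV. raise2 g S a l x * pd (T l c) b x) * X c b)
       = (\<Sum>b\<in>UNIV. \<Sum>c\<in>UNIV. (\<Sum>l\<in>UNIV. raise2 g S a l x * pd (T l c) b x) * X c b)" by (rule sum.swap)
    also have "\<dots> = (\<Sum>c\<in>UNIV. \<Sum>b\<in>UNIV. (\<Sum>l\<in>UNIV. raise2 g S a l x * pd (T l b) c x) * X c b)"
      by (simp add: X_sym)
    finally show ?thesis using deriv_c by simp
  qed
  have deriv_l: "(\<Sum>c\<in>UNIV. \<Sum>b\<in>UNIV. (\<Sum>l\<in>UNIV. raise2 g S a l x * pd (T c b) l x) * X c b) = 0"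
  proof -
    have "(\<Sum>c\<in>UNIV. \<Sum>b\<in>UNIV. (\<Sum>l\<in>UNIV. raise2 g S a l x * pd (T c b) l x) * X c b)
       = (\<Sum>l\<in>UNIV. raise2 g S a l x * (\<Sum>c\<in>UNIV. \<Sum>b\<in>UNIV. pd (T c b) l x * X c b))" by (rule contract_assoc3)
    also have "\<dots> = 0" using pd_idem_contract_orth[where T=T and X=X, OF x T idem annihilates_snd annihilates_fst] by simp
    finally show ?thesis .
  qed
  have "(\<Sum>c\<in>UNIV. \<Sum>b\<in>UNIV. (\<Sum>l\<in>UNIV. raise2 g S a l x * christoffel1 T l c b x) * X c b)
     = (\<Sum>c\<in>UNIV. \<Sum>b\<in>UNIV. (\<Sum>l\<in>UNIV. raise2 g S a l x * pd (T l b) c x) * X c b)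
     + (\<Sum>c\<in>UNIV. \<Sum>b\<in>UNIV. (\<Sum>l\<in>UNIV. raise2 g S a l x * pd (T l c) b x) * X c b)
     - (\<Sum>c\<in>UNIV. \<Sum>b\<in>UNIV. (\<Sum>l\<in>UNIV. raise2 g S a l x * pd (T c b) l x) * X c b)"
    unfolding christoffel1_def by (simp add: ring_distribs sum.distrib sum_subtractf)
  then show ?thesis using deriv_c deriv_b deriv_l by simp
qed

end

section \<open>Lie derivatives along a bi-conformal vector field\<close>

context biconformal_pair
begin

lemmas projector_mat_simps =
  P_idem_mat P_idem_mat_right P_orth_mat P_orth_mat_right
  swap.P_idem_mat swap.P_idem_mat_right swap.P_orth_mat swap.P_orth_mat_right

lemma raise2_P_add_PP: "x \<in> U \<Longrightarrow> raise2 g P a l x + raise2 g PP a l x = (if a = l then 1 else 0)"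
proof -
  assume x: "x \<in> U"
  have "raise2 g P a l x + raise2 g PP a l x = ((gmat P x + gmat PP x) ** ginv_mat x) $ a $ l"
    by (simp add: raise2_mat matrix_mult_nth ring_distribs sum.distrib)
  also have "gmat P x + gmat PP x = gmat g x" using x by (simp add: vec_eq_iff P_add_PP)
  finally show ?thesis using x by (simp add: gmat_ginv_mat mat_def)
qed

lemma P_contract_up2_P: "x \<in> U \<Longrightarrow> (\<Sum>k\<in>UNIV. P a k x * up2 g P k l x) = raise2 g P a l x"
  by (simp add: contract_up2_mat raise2_mat matrix_mul_assoc[symmetric] projector_mat_simps)

lemma P_contract_up2_PP: "x \<in> U \<Longrightarrow> (\<Sum>k\<in>UNIV. P a k x * up2 g PP k l x) = 0"
  by (simp add: contract_up2_mat matrix_mul_assoc[symmetric] projector_mat_simps)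

lemma lie2_g: "x \<in> U \<Longrightarrow> lie2 xi g a b x = phi x * P a b x + chi x * PP a b x"
proof -
  assume x: "x \<in> U"
  have "lie2 xi g a b x = lie2 xi (\<lambda>a b y. P a b y + PP a b y) a b x"
    by (rule lie2_cong[OF open_U x]) (simp add: P_add_PP)
  also have "\<dots> = lie2 xi P a b x + lie2 xi PP a b x"
    unfolding lie2_def using x
    by (simp add: pd_add differentiable_P swap.differentiable_P ring_distribs sum.distrib)
  finally show ?thesis using x by (simp add: lie2_P swap.lie2_P)
qed

lemma lie20_ginv_biconformal:
  "x \<in> U \<Longrightarrow> lie20 xi (ginv g) a b x = - (phi x * up2 g P a b x + chi x * up2 g PP a b x)"
  unfolding lie20_ginv[OF metric] up2_def
  by (simp add: lie2_g ring_distribs sum.distrib sum_distrib_left ginv_sym[OF metric, of _ _ b] mult_ac)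

lemma lie11_raise2_P: "x \<in> U \<Longrightarrow> lie11 xi (raise2 g P) a l x = 0"
proof -
  assume x: "x \<in> U"
  have "lie11 xi (raise2 g P) a l x
      = (\<Sum>k\<in>UNIV. lie2 xi P a k x * ginv g k l x) + (\<Sum>k\<in>UNIV. P a k x * lie20 xi (ginv g) k l x)"
    unfolding raise2_def[abs_def]
    by (rule lie11_contract_2_20) (auto intro: differentiable_P differentiable_ginv x)
  also have "\<dots> = phi x * raise2 g P a l x - phi x * (\<Sum>k\<in>UNIV. P a k x * up2 g P k l x)
      - chi x * (\<Sum>k\<in>UNIV. P a k x * up2 g PP k l x)"
    using x by (simp add: lie2_P lie20_ginv_biconformal raise2_def sum_distrib_left ring_distribs
        sum.distrib sum_subtractf sum_negf mult_ac)
  also have "\<dots> = 0" using x by (simp add: P_contract_up2_P P_contract_up2_PP)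
  finally show ?thesis .
qed

lemma lie20_up2_P: "x \<in> U \<Longrightarrow> lie20 xi (up2 g P) c b x = - phi x * up2 g P c b x"
proof -
  assume x: "x \<in> U"
  have "lie20 xi (up2 g P) c b x = lie20 xi (\<lambda>c b y. \<Sum>i\<in>UNIV. ginv g c i y * raise2 g P i b y) c b x"
    by (rule lie20_cong[OF open_U x]) (simp add: up2_eq_ginv_raise2)
  also have "\<dots> = (\<Sum>i\<in>UNIV. lie20 xi (ginv g) c i x * raise2 g P i b x)
      + (\<Sum>i\<in>UNIV. ginv g c i x * lie11 xi (raise2 g P) i b x)"
    by (rule lie20_contract_20_11) (auto intro: differentiable_raise2_P differentiable_ginv x)
  also have "\<dots> = - phi x * (\<Sum>i\<in>UNIV. up2 g P c i x * raise2 g P i b x)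
      - chi x * (\<Sum>i\<in>UNIV. up2 g PP c i x * raise2 g P i b x)"
    using x by (simp add: lie11_raise2_P lie20_ginv_biconformal sum_distrib_left ring_distribs
        sum.distrib sum_subtractf sum_negf mult_ac)
  also have "\<dots> = - phi x * up2 g P c b x"
    using x by (simp add: up2_contract_raise2_mat) (simp add: up2_mat matrix_mul_assoc[symmetric] projector_mat_simps)
  finally show ?thesis .
qed

end

context biconformal_pair
begin

lemma christoffel_sym: "x \<in> U \<Longrightarrow> christoffel g k i j x = christoffel g k j i x"
proof -
  assume x: "x \<in> U"
  have "\<And>l. pd (g i j) l x = pd (g j i) l x" by (rule pd_cong_open[OF open_U x]) (rule g_sym)
  then show ?thesis unfolding christoffel_def by (simp add: add.commute)
qed

lemma christoffel_eq_christoffel1: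
  "x \<in> U \<Longrightarrow> christoffel g k b c x = 1/2 * (\<Sum>l\<in>UNIV. ginv g k l x * christoffel1 g l b c x)"
proof -
  assume x: "x \<in> U"
  have "\<And>i j k. pd (g i j) k x = pd (g j i) k x" by (rule pd_cong_open[OF open_U x]) (rule g_sym)
  then show ?thesis unfolding christoffel_def christoffel1_def by simp
qed

lemma christoffel1_g: "x \<in> U \<Longrightarrow> christoffel1 g l b c x = christoffel1 P l b c x + christoffel1 PP l b c x"
proof -
  assume x: "x \<in> U"
  have "\<And>i j k. pd (g i j) k x = pd (\<lambda>y. P i j y + PP i j y) k x"
    by (rule pd_cong_open[OF open_U x]) (simp add: P_add_PP)
  then show ?thesis unfolding christoffel1_def using x by (simp add: pd_add differentiable_P swap.differentiable_P)
qed

lemma Mt_eq_christoffel1: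
  assumes x: "x \<in> U"
  shows "Mt g P a b c x = (\<Sum>l\<in>UNIV. raise2 g PP a l x * christoffel1 P l b c x)
    - (\<Sum>l\<in>UNIV. raise2 g P a l x * christoffel1 PP l b c x)"
proof -
  have Mt_christoffel: "Mt g P a b c x = christoffel1 P a b c x - 2 * (\<Sum>k\<in>UNIV. christoffel g k b c x * P a k x)"
  proof -
    have "(\<Sum>k\<in>UNIV. christoffel g k b a x * P k c x) = (\<Sum>k\<in>UNIV. christoffel g k a b x * P k c x)"
      "(\<Sum>k\<in>UNIV. christoffel g k c a x * P k b x) = (\<Sum>k\<in>UNIV. christoffel g k a c x * P b k x)"
      "(\<Sum>k\<in>UNIV. christoffel g k c b x * P a k x) = (\<Sum>k\<in>UNIV. christoffel g k b c x * P a k x)"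
      using x by (simp_all add: christoffel_sym[of x _ b a] christoffel_sym[of x _ c a]
          christoffel_sym[of x _ c b] P_sym[of x _ b])
    then show ?thesis unfolding Mt_def nabla2_def christoffel1_def by linarith
  qed
  have "2 * (\<Sum>k\<in>UNIV. christoffel g k b c x * P a k x)
      = (\<Sum>k\<in>UNIV. P a k x * (\<Sum>l\<in>UNIV. ginv g k l x * christoffel1 g l b c x))"
    using x by (simp add: christoffel_eq_christoffel1 sum_distrib_left mult_ac)
  also have "\<dots> = (\<Sum>l\<in>UNIV. raise2 g P a l x * christoffel1 g l b c x)"
    unfolding raise2_def by (simp add: sum_distrib_left sum_distrib_right mult_ac) (rule sum.swap)
  finally have christoffel_term: "2 * (\<Sum>k\<in>UNIV. christoffel g k b c x * P a k x)
      = (\<Sum>l\<in>UNIV. raise2 g P a l x * christoffel1 g l b c x)" .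
  have "christoffel1 P a b c x = (\<Sum>l\<in>UNIV. (raise2 g P a l x + raise2 g PP a l x) * christoffel1 P l b c x)"
    using x by (simp add: raise2_P_add_PP if_distrib[of "\<lambda>u. u * _"] cong: if_cong)
  then show ?thesis unfolding Mt_christoffel christoffel_term using x
    by (simp add: christoffel1_g ring_distribs sum.distrib sum_subtractf)
qed

lemma differentiable_christoffel1_P: "x \<in> U \<Longrightarrow> christoffel1 P l b c differentiable (at x)"
  unfolding christoffel1_def[abs_def] by (auto intro!: differentiable_add differentiable_diff differentiable_pd_P)

lemma christoffel1_lie2_P:
  assumes x: "x \<in> U"
  shows "christoffel1 (lie2 xi P) l b c x
    = phi x * christoffel1 P l b c x + pd phi b x * P l c x + pd phi c x * P l b x - pd phi l x * P b c x"
proof -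
  have "\<And>i j k. pd (lie2 xi P i j) k x = pd (\<lambda>y. phi y * P i j y) k x"
    by (rule pd_cong_open[OF open_U x]) (simp add: lie2_P)
  then show ?thesis unfolding christoffel1_def using x
    by (simp add: pd_mult differentiable_phi differentiable_P ring_distribs)
qed

lemma lie3_christoffel1_P:
  "x \<in> U \<Longrightarrow> lie3 xi (christoffel1 P) l b c x
    = christoffel1 (lie2 xi P) l b c x - 2 * (\<Sum>k\<in>UNIV. P l k x * pd (pd (xi k) b) c x)"
  by (rule lie3_christoffel1[OF open_U]) (auto intro: P_sym smooth_P smooth_xi)

lemma raise2_P_contract_PP: "x \<in> U \<Longrightarrow> (\<Sum>l\<in>UNIV. raise2 g P a l x * PP l k x) = 0"
  by (simp add: raise2_contract_mat matrix_mul_assoc[symmetric] projector_mat_simps)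

lemma raise2_P_contract_raise2_P:
  "x \<in> U \<Longrightarrow> (\<Sum>l\<in>UNIV. raise2 g P a l x * raise2 g P l k x) = raise2 g P a k x"
  by (simp only: raise2_contract_raise2_mat) (simp add: raise2_mat matrix_mul_assoc[symmetric] projector_mat_simps)

lemma raise2_P_contract_raise2_PP: "x \<in> U \<Longrightarrow> (\<Sum>l\<in>UNIV. raise2 g P a l x * raise2 g PP l k x) = 0"
  by (simp add: raise2_contract_raise2_mat matrix_mul_assoc[symmetric] projector_mat_simps)

end

context biconformal_pair
begin

lemma differentiable_Mt: "x \<in> U \<Longrightarrow> Mt g P a b c differentiable (at x)"
proof -
  assume x: "x \<in> U"
  have d: "(\<lambda>y. (\<Sum>l\<in>UNIV. raise2 g PP a l y * christoffel1 P l b c y)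
      - (\<Sum>l\<in>UNIV. raise2 g P a l y * christoffel1 PP l b c y)) differentiable (at x)"
    by (auto intro!: differentiable_sum differentiable_mult differentiable_diff x differentiable_raise2_P
        swap.differentiable_raise2_P differentiable_christoffel1_P swap.differentiable_christoffel1_P)
  show ?thesis by (rule differentiable_cong_open[OF open_U x _ d]) (simp add: Mt_eq_christoffel1)
qed

lemma Mt_PP_eq_neg: "x \<in> U \<Longrightarrow> Mt g PP a b c x = - Mt g P a b c x"
  by (simp add: Mt_eq_christoffel1 swap.Mt_eq_christoffel1)

lemma Ev_PP_eq_Wv: "x \<in> U \<Longrightarrow> Ev g PP a x = Wv g P PP a x"
  unfolding Ev_def Wv_def by (simp add: Mt_PP_eq_neg sum_negf)

lemma raise2_P_contract_Mt:
  "x \<in> U \<Longrightarrow> (\<Sum>r\<in>UNIV. raise2 g P a r x * Mt g P r b c x) = - (\<Sum>l\<in>UNIV. raise2 g P a l x * christoffel1 PP l b c x)"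
  by (simp add: Mt_eq_christoffel1 right_diff_distrib sum_subtractf contract_assoc raise2_P_contract_raise2_P
      raise2_P_contract_raise2_PP)

lemma raise2_PP_contract_Mt:
  "x \<in> U \<Longrightarrow> (\<Sum>r\<in>UNIV. raise2 g PP a r x * Mt g P r b c x) = (\<Sum>l\<in>UNIV. raise2 g PP a l x * christoffel1 P l b c x)"
  by (simp add: Mt_eq_christoffel1 right_diff_distrib sum_subtractf contract_assoc swap.raise2_P_contract_raise2_P
      swap.raise2_P_contract_raise2_PP)

lemma raise2_PP_contract_lie3_christoffel1_P:
  assumes x: "x \<in> U"
  shows "(\<Sum>l\<in>UNIV. raise2 g PP a l x * lie3 xi (christoffel1 P) l b c x)
    = phi x * (\<Sum>l\<in>UNIV. raise2 g PP a l x * christoffel1 P l b c x)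
      - (\<Sum>q\<in>UNIV. PP a q x * grad g phi q x) * P b c x"
proof -
  have "(\<Sum>l\<in>UNIV. raise2 g PP a l x * lie3 xi (christoffel1 P) l b c x)
    = phi x * (\<Sum>l\<in>UNIV. raise2 g PP a l x * christoffel1 P l b c x)
      + pd phi b x * (\<Sum>l\<in>UNIV. raise2 g PP a l x * P l c x)
      + pd phi c x * (\<Sum>l\<in>UNIV. raise2 g PP a l x * P l b x)
      - (\<Sum>l\<in>UNIV. raise2 g PP a l x * pd phi l x) * P b c x
      - 2 * (\<Sum>l\<in>UNIV. raise2 g PP a l x * (\<Sum>k\<in>UNIV. P l k x * pd (pd (xi k) b) c x))"
    using x by (simp add: lie3_christoffel1_P christoffel1_lie2_P ring_distribs sum.distrib sum_subtractf
        sum_distrib_left sum_distrib_right mult_ac)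
  then show ?thesis using x by (simp add: contract_assoc swap.raise2_P_contract_PP raise2_contract_pd)
qed

end

context biconformal_pair
begin

lemma lie3_Mt:
  assumes x: "x \<in> U"
  shows "lie3 xi (Mt g P) a b c x = phi x * (\<Sum>r\<in>UNIV. raise2 g PP a r x * Mt g P r b c x)
     + chi x * (\<Sum>r\<in>UNIV. raise2 g P a r x * Mt g P r b c x)
     - (\<Sum>q\<in>UNIV. PP a q x * grad g phi q x) * P b c x + (\<Sum>q\<in>UNIV. P a q x * grad g chi q x) * PP b c x"
proof -
  have "lie3 xi (Mt g P) a b c x = lie3 xi (\<lambda>a b c y. (\<Sum>l\<in>UNIV. raise2 g PP a l y * christoffel1 P l b c y)
       - (\<Sum>l\<in>UNIV. raise2 g P a l y * christoffel1 PP l b c y)) a b c x"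
    by (rule lie3_cong[OF open_U x]) (simp add: Mt_eq_christoffel1)
  also have "\<dots> = lie3 xi (\<lambda>a b c y. \<Sum>l\<in>UNIV. raise2 g PP a l y * christoffel1 P l b c y) a b c x
       - lie3 xi (\<lambda>a b c y. \<Sum>l\<in>UNIV. raise2 g P a l y * christoffel1 PP l b c y) a b c x"
    by (rule lie3_diff) (auto intro!: differentiable_sum differentiable_mult x differentiable_raise2_P
        swap.differentiable_raise2_P differentiable_christoffel1_P swap.differentiable_christoffel1_P)
  also have "\<dots> = (\<Sum>l\<in>UNIV. lie11 xi (raise2 g PP) a l x * christoffel1 P l b c x)
       + (\<Sum>l\<in>UNIV. raise2 g PP a l x * lie3 xi (christoffel1 P) l b c x)
     - ((\<Sum>l\<in>UNIV. lie11 xi (raise2 g P) a l x * christoffel1 PP l b c x)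
       + (\<Sum>l\<in>UNIV. raise2 g P a l x * lie3 xi (christoffel1 PP) l b c x))"
    by (subst lie3_contract_11_3, auto intro: x differentiable_raise2_P swap.differentiable_raise2_P
        differentiable_christoffel1_P swap.differentiable_christoffel1_P)+
  also have "\<dots> = phi x * (\<Sum>l\<in>UNIV. raise2 g PP a l x * christoffel1 P l b c x)
       - (\<Sum>q\<in>UNIV. PP a q x * grad g phi q x) * P b c x
     - (chi x * (\<Sum>l\<in>UNIV. raise2 g P a l x * christoffel1 PP l b c x)
       - (\<Sum>q\<in>UNIV. P a q x * grad g chi q x) * PP b c x)"
    using x by (simp add: lie11_raise2_P swap.lie11_raise2_P raise2_PP_contract_lie3_christoffel1_P
        swap.raise2_PP_contract_lie3_christoffel1_P)
  finally show ?thesis using x by (simp add: raise2_P_contract_Mt raise2_PP_contract_Mt)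
qed

lemma up2_P_sym: "x \<in> U \<Longrightarrow> up2 g P c b x = up2 g P b c x"
  by (rule up2_sym) (auto intro: P_sym)

lemma PP_contract_up2_P_snd: "x \<in> U \<Longrightarrow> (\<Sum>b\<in>UNIV. PP r b x * up2 g P c b x) = 0"
  using swap.P_contract_up2_PP by (simp add: up2_P_sym[of x c])

lemma PP_contract_up2_P_fst: "x \<in> U \<Longrightarrow> (\<Sum>c\<in>UNIV. PP c q x * up2 g P c b x) = 0"
  using swap.P_contract_up2_PP by (simp add: swap.P_sym[of x _ q])

lemma raise2_P_contract_Ev: "x \<in> U \<Longrightarrow> (\<Sum>r\<in>UNIV. raise2 g P a r x * Ev g P r x) = 0"
proof -
  assume x: "x \<in> U"
  have "(\<Sum>r\<in>UNIV. raise2 g P a r x * Ev g P r x)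
     = (\<Sum>c\<in>UNIV. \<Sum>b\<in>UNIV. (\<Sum>r\<in>UNIV. raise2 g P a r x * Mt g P r c b x) * up2 g P c b x)"
    unfolding Ev_def by (rule contract_assoc3[symmetric])
  also have "\<dots> = - (\<Sum>c\<in>UNIV. \<Sum>b\<in>UNIV. (\<Sum>l\<in>UNIV. raise2 g P a l x * christoffel1 PP l c b x) * up2 g P c b x)"
    using x by (simp add: raise2_P_contract_Mt sum_negf)
  also have "\<dots> = 0"
    using raise2_contract_christoffel1_orth[OF x smooth_P swap.smooth_P P_orth swap.P_idem up2_P_sym[OF x]
        PP_contract_up2_P_snd[OF x] PP_contract_up2_P_fst[OF x]] by simp
  finally show ?thesis .
qed

lemma raise2_PP_contract_Ev: "x \<in> U \<Longrightarrow> (\<Sum>r\<in>UNIV. raise2 g PP a r x * Ev g P r x) = Ev g P a x"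
proof -
  assume x: "x \<in> U"
  have "(\<Sum>r\<in>UNIV. (raise2 g P a r x + raise2 g PP a r x) * Ev g P r x) = Ev g P a x"
    using x by (simp add: raise2_P_add_PP if_distrib[of "\<lambda>u. u * _"] cong: if_cong)
  then show ?thesis using raise2_P_contract_Ev[OF x] by (simp add: ring_distribs sum.distrib)
qed

lemma differentiable_Ev: "x \<in> U \<Longrightarrow> Ev g P a differentiable (at x)"
  unfolding Ev_def[abs_def]
  by (auto intro!: differentiable_sum differentiable_mult differentiable_Mt differentiable_up2_P)

lemma trace2_eq_raise2: "x \<in> U \<Longrightarrow> trace2 g P x = (\<Sum>c\<in>UNIV. raise2 g P c c x)"
  unfolding raise2_def trace2_def by (simp add: ginv_sym[OF metric, of x _ c for c] mult.commute)

lemma P_contract_up2_P_trace: "x \<in> U \<Longrightarrow> (\<Sum>c\<in>UNIV. \<Sum>b\<in>UNIV. P c b x * up2 g P c b x) = trace2 g P x"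
proof -
  assume x: "x \<in> U"
  have "(\<Sum>b\<in>UNIV. P c b x * up2 g P c b x) = raise2 g P c c x" for c
    using P_contract_up2_P[OF x, of c c] by (simp only: up2_P_sym[OF x, of c])
  then show ?thesis by (simp add: trace2_eq_raise2[OF x])
qed

lemma lie3_Mt_contract:
  assumes x: "x \<in> U"
  shows "(\<Sum>c\<in>UNIV. \<Sum>b\<in>UNIV. lie3 xi (Mt g P) a c b x * X c b)
    = phi x * (\<Sum>r\<in>UNIV. raise2 g PP a r x * (\<Sum>c\<in>UNIV. \<Sum>b\<in>UNIV. Mt g P r c b x * X c b))
    + chi x * (\<Sum>r\<in>UNIV. raise2 g P a r x * (\<Sum>c\<in>UNIV. \<Sum>b\<in>UNIV. Mt g P r c b x * X c b))
    - (\<Sum>q\<in>UNIV. PP a q x * grad g phi q x) * (\<Sum>c\<in>UNIV. \<Sum>b\<in>UNIV. P c b x * X c b)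
    + (\<Sum>q\<in>UNIV. P a q x * grad g chi q x) * (\<Sum>c\<in>UNIV. \<Sum>b\<in>UNIV. PP c b x * X c b)"
proof -
  have "lie3 xi (Mt g P) a c b x * X c b
      = phi x * ((\<Sum>r\<in>UNIV. raise2 g PP a r x * Mt g P r c b x) * X c b)
      + chi x * ((\<Sum>r\<in>UNIV. raise2 g P a r x * Mt g P r c b x) * X c b)
      - (\<Sum>q\<in>UNIV. PP a q x * grad g phi q x) * (P c b x * X c b)
      + (\<Sum>q\<in>UNIV. P a q x * grad g chi q x) * (PP c b x * X c b)" for c b
    using x by (simp add: lie3_Mt algebra_simps)
  then have "(\<Sum>c\<in>UNIV. \<Sum>b\<in>UNIV. lie3 xi (Mt g P) a c b x * X c b)
    = phi x * (\<Sum>c\<in>UNIV. \<Sum>b\<in>UNIV. (\<Sum>r\<in>UNIV. raise2 g PP a r x * Mt g P r c b x) * X c b)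
    + chi x * (\<Sum>c\<in>UNIV. \<Sum>b\<in>UNIV. (\<Sum>r\<in>UNIV. raise2 g P a r x * Mt g P r c b x) * X c b)
    - (\<Sum>q\<in>UNIV. PP a q x * grad g phi q x) * (\<Sum>c\<in>UNIV. \<Sum>b\<in>UNIV. P c b x * X c b)
    + (\<Sum>q\<in>UNIV. P a q x * grad g chi q x) * (\<Sum>c\<in>UNIV. \<Sum>b\<in>UNIV. PP c b x * X c b)"
    by (simp add: sum.distrib sum_subtractf sum_distrib_left)
  then show ?thesis by (simp add: contract_assoc3)
qed

lemma lie1_Ev:
  assumes x: "x \<in> U"
  shows "lie1 xi (Ev g P) a x = - trace2 g P x * (\<Sum>q\<in>UNIV. PP a q x * grad g phi q x)"
proof -
  have "lie1 xi (Ev g P) a x = (\<Sum>c\<in>UNIV. \<Sum>b\<in>UNIV. lie3 xi (Mt g P) a c b x * up2 g P c b x)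
      + (\<Sum>c\<in>UNIV. \<Sum>b\<in>UNIV. Mt g P a c b x * lie20 xi (up2 g P) c b x)"
    unfolding Ev_def[abs_def] by (rule lie1_contract_3_20) (auto intro: differentiable_Mt differentiable_up2_P x)
  also have "(\<Sum>c\<in>UNIV. \<Sum>b\<in>UNIV. Mt g P a c b x * lie20 xi (up2 g P) c b x) = - phi x * Ev g P a x"
    using x by (simp add: lie20_up2_P Ev_def sum_distrib_left mult_ac)
  also have "(\<Sum>c\<in>UNIV. \<Sum>b\<in>UNIV. lie3 xi (Mt g P) a c b x * up2 g P c b x)
      = phi x * Ev g P a x - trace2 g P x * (\<Sum>q\<in>UNIV. PP a q x * grad g phi q x)"
    using x by (simp add: lie3_Mt_contract Ev_def[symmetric] raise2_PP_contract_Ev raise2_P_contract_Ev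
        P_contract_up2_P_trace PP_contract_up2_P_snd)
  finally show ?thesis by simp
qed

end

context biconformal_pair
begin

lemma trace2_P_add_PP: "x \<in> U \<Longrightarrow> trace2 g P x + trace2 g PP x = real CARD('n)"
  by (simp add: trace2_eq_raise2 swap.trace2_eq_raise2 raise2_P_add_PP flip: sum.distrib)

lemma raise2_PP_contract_Wv: "x \<in> U \<Longrightarrow> (\<Sum>r\<in>UNIV. raise2 g PP a r x * Wv g P PP r x) = 0"
  using swap.raise2_P_contract_Ev by (simp add: Ev_PP_eq_Wv)

lemma raise2_P_contract_Wv: "x \<in> U \<Longrightarrow> (\<Sum>r\<in>UNIV. raise2 g P a r x * Wv g P PP r x) = Wv g P PP a x"
  using swap.raise2_PP_contract_Ev by (simp add: Ev_PP_eq_Wv)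

lemma differentiable_Wv: "x \<in> U \<Longrightarrow> Wv g P PP a differentiable (at x)"
  by (rule differentiable_cong_open[OF open_U _ _ swap.differentiable_Ev]) (simp_all add: Ev_PP_eq_Wv)

lemma lie1_Wv:
  assumes x: "x \<in> U"
  shows "lie1 xi (Wv g P PP) a x = - trace2 g PP x * (\<Sum>q\<in>UNIV. P a q x * grad g chi q x)"
proof -
  have "lie1 xi (Wv g P PP) a x = lie1 xi (Ev g PP) a x"
    by (rule lie1_cong[OF open_U x]) (simp add: Ev_PP_eq_Wv)
  then show ?thesis using swap.lie1_Ev[OF x] by simp
qed

lemma Tt_eq_lincomb:
  "Tt g P PP p = (\<lambda>a b c y. Mt g P a b c y + 1 / (real CARD('n) - real p) * (Wv g P PP a y * PP b c y)
      - 1 / real p * (Ev g P a y * P b c y))"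
  by (simp add: fun_eq_iff Tt_def)

lemma differentiable_Tt: "x \<in> U \<Longrightarrow> Tt g P PP p a b c differentiable (at x)"
  unfolding Tt_eq_lincomb
  by (intro differentiable_add differentiable_diff differentiable_mult differentiable_const
      differentiable_Mt differentiable_Wv differentiable_Ev differentiable_P swap.differentiable_P)

lemma lie3_Tt_expand:
  assumes x: "x \<in> U" and tr: "trace2 g P x = real p" and p: "0 < p" "p < CARD('n)"
  shows "lie3 xi (Tt g P PP p) a b c x = phi x * (\<Sum>r\<in>UNIV. raise2 g PP a r x * Mt g P r b c x)
     + chi x * (\<Sum>r\<in>UNIV. raise2 g P a r x * Mt g P r b c x)
     + chi x * Wv g P PP a x * PP b c x / (real CARD('n) - real p) - phi x * Ev g P a x * P b c x / real p"
proof -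
  have trPP: "trace2 g PP x = real CARD('n) - real p"
    using trace2_P_add_PP[OF x] tr by simp
  have "lie3 xi (Tt g P PP p) a b c x = lie3 xi (Mt g P) a b c x
     + 1 / (real CARD('n) - real p) * lie3 xi (\<lambda>a b c y. Wv g P PP a y * PP b c y) a b c x
     - 1 / real p * lie3 xi (\<lambda>a b c y. Ev g P a y * P b c y) a b c x"
    unfolding Tt_eq_lincomb by (rule lie3_lincomb; auto intro!: differentiable_mult differentiable_Mt differentiable_Wv
        differentiable_Ev differentiable_P swap.differentiable_P x)
  also have "lie3 xi (\<lambda>a b c y. Wv g P PP a y * PP b c y) a b c x
      = (real p - real CARD('n)) * (\<Sum>q\<in>UNIV. P a q x * grad g chi q x) * PP b c x
        + Wv g P PP a x * (chi x * PP b c x)"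
    by (subst lie3_tensor_1_2) (auto intro: differentiable_Wv swap.differentiable_P x simp: lie1_Wv x trPP swap.lie2_P)
  also have "lie3 xi (\<lambda>a b c y. Ev g P a y * P b c y) a b c x
      = - real p * (\<Sum>q\<in>UNIV. PP a q x * grad g phi q x) * P b c x + Ev g P a x * (phi x * P b c x)"
    using tr by (subst lie3_tensor_1_2) (auto intro: differentiable_Ev differentiable_P x simp: lie1_Ev x lie2_P)
  finally show ?thesis using p x by (simp add: lie3_Mt field_simps)
qed

lemma raise2_P_contract_Tt:
  assumes x: "x \<in> U"
  shows "(\<Sum>s\<in>UNIV. raise2 g P a s x * Tt g P PP p s b c x)
    = (\<Sum>s\<in>UNIV. raise2 g P a s x * Mt g P s b c x) + Wv g P PP a x * PP b c x / (real CARD('n) - real p)"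
proof -
  have "(\<Sum>s\<in>UNIV. raise2 g P a s x * Tt g P PP p s b c x) = (\<Sum>s\<in>UNIV. raise2 g P a s x * Mt g P s b c x)
      + (\<Sum>s\<in>UNIV. raise2 g P a s x * Wv g P PP s x) * PP b c x / (real CARD('n) - real p)
      - (\<Sum>s\<in>UNIV. raise2 g P a s x * Ev g P s x) * P b c x / real p"
  proof -
    have "raise2 g P a s x * Tt g P PP p s b c x = raise2 g P a s x * Mt g P s b c x
        + raise2 g P a s x * Wv g P PP s x * (PP b c x / (real CARD('n) - real p))
        - raise2 g P a s x * Ev g P s x * (P b c x / real p)" for s
      by (simp add: Tt_def algebra_simps)
    then show ?thesis by (simp add: sum.distrib sum_subtractf sum_distrib_right sum_divide_distrib)
  qed
  then show ?thesis using x by (simp add: raise2_P_contract_Ev raise2_P_contract_Wv)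
qed

lemma raise2_PP_contract_Tt:
  assumes x: "x \<in> U"
  shows "(\<Sum>s\<in>UNIV. raise2 g PP a s x * Tt g P PP p s b c x)
    = (\<Sum>s\<in>UNIV. raise2 g PP a s x * Mt g P s b c x) - Ev g P a x * P b c x / real p"
proof -
  have "(\<Sum>s\<in>UNIV. raise2 g PP a s x * Tt g P PP p s b c x) = (\<Sum>s\<in>UNIV. raise2 g PP a s x * Mt g P s b c x)
      + (\<Sum>s\<in>UNIV. raise2 g PP a s x * Wv g P PP s x) * PP b c x / (real CARD('n) - real p)
      - (\<Sum>s\<in>UNIV. raise2 g PP a s x * Ev g P s x) * P b c x / real p"
  proof -
    have "raise2 g PP a s x * Tt g P PP p s b c x = raise2 g PP a s x * Mt g P s b c x
        + raise2 g PP a s x * Wv g P PP s x * (PP b c x / (real CARD('n) - real p))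
        - raise2 g PP a s x * Ev g P s x * (P b c x / real p)" for s
      by (simp add: Tt_def algebra_simps)
    then show ?thesis by (simp add: sum.distrib sum_subtractf sum_distrib_right sum_divide_distrib)
  qed
  then show ?thesis using x by (simp add: raise2_PP_contract_Ev raise2_PP_contract_Wv)
qed

lemma lie3_Tt:
  assumes x: "x \<in> U" and tr: "trace2 g P x = real p" and p: "0 < p" "p < CARD('n)"
  shows "lie3 xi (Tt g P PP p) a b c x =
     (\<Sum>r\<in>UNIV. (phi x * PP a r x + chi x * P a r x) * (\<Sum>s\<in>UNIV. ginv g r s x * Tt g P PP p s b c x))"
proof -
  have "(\<Sum>r\<in>UNIV. (phi x * PP a r x + chi x * P a r x) * (\<Sum>s\<in>UNIV. ginv g r s x * Tt g P PP p s b c x))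
     = phi x * (\<Sum>s\<in>UNIV. raise2 g PP a s x * Tt g P PP p s b c x)
       + chi x * (\<Sum>s\<in>UNIV. raise2 g P a s x * Tt g P PP p s b c x)"
  proof -
    have contract: "(\<Sum>r\<in>UNIV. Q a r x * (\<Sum>s\<in>UNIV. ginv g r s x * Tt g P PP p s b c x))
        = (\<Sum>s\<in>UNIV. raise2 g Q a s x * Tt g P PP p s b c x)" for Q
      by (simp add: contract_assoc raise2_def)
    show ?thesis unfolding contract[of P, symmetric] contract[of PP, symmetric]
      by (simp add: ring_distribs sum.distrib sum_distrib_left mult_ac)
  qed
  then show ?thesis
    using x by (simp add: lie3_Tt_expand[OF x tr p] raise2_P_contract_Tt raise2_PP_contract_Tt algebra_simps)
qed

lemma mixup_eq: "x \<in> U \<Longrightarrow> mixup g S T a b c x = (\<Sum>d\<in>UNIV. up2 g S a d x * T d b c x)"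
proof -
  assume x: "x \<in> U"
  have "(\<Sum>d\<in>UNIV. up2 g S a d x * T d b c x)
      = (\<Sum>d\<in>UNIV. \<Sum>i\<in>UNIV. \<Sum>j\<in>UNIV. ginv g a i x * ginv g d j x * S i j x * T d b c x)"
    by (simp add: up2_def sum_distrib_right)
  also have "\<dots> = (\<Sum>i\<in>UNIV. \<Sum>j\<in>UNIV. \<Sum>d\<in>UNIV. ginv g a i x * ginv g d j x * S i j x * T d b c x)"
    by (rule sum_rotate3)
  also have "\<dots> = mixup g S T a b c x"
    unfolding mixup_def by (simp add: ginv_sym[OF metric x] mult_ac)
  finally show ?thesis by simp
qed

lemma lie12_mixup_P:
  assumes x: "x \<in> U" and dT: "\<And>d b c. T d b c differentiable (at x)"
    and lie3_T: "\<And>d b c. lie3 xi T d b c x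
      = (\<Sum>r\<in>UNIV. (phi x * PP d r x + chi x * P d r x) * (\<Sum>s\<in>UNIV. ginv g r s x * T s b c x))"
  shows "lie12 xi (mixup g P T) a b c x = (chi x - phi x) * mixup g P T a b c x"
proof -
  have "lie12 xi (mixup g P T) a b c x = lie12 xi (\<lambda>a b c y. \<Sum>d\<in>UNIV. up2 g P a d y * T d b c y) a b c x"
    by (rule lie12_cong[OF open_U x]) (simp add: mixup_eq)
  also have "\<dots> = (\<Sum>d\<in>UNIV. lie20 xi (up2 g P) a d x * T d b c x) + (\<Sum>d\<in>UNIV. up2 g P a d x * lie3 xi T d b c x)"
    by (rule lie12_contract_20_3) (auto intro: differentiable_up2_P dT x)
  also have "(\<Sum>d\<in>UNIV. up2 g P a d x * lie3 xi T d b c x)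
     = (\<Sum>r\<in>UNIV. (\<Sum>d\<in>UNIV. up2 g P a d x * (phi x * PP d r x + chi x * P d r x))
         * (\<Sum>s\<in>UNIV. ginv g r s x * T s b c x))"
    by (simp add: lie3_T contract_assoc)
  also have "\<dots> = chi x * (\<Sum>r\<in>UNIV. (ginv_mat x ** gmat P x) $ a $ r * (\<Sum>s\<in>UNIV. ginv_mat x $ r $ s * T s b c x))"
  proof -
    have "(\<Sum>d\<in>UNIV. up2 g P a d x * (phi x * PP d r x + chi x * P d r x))
       = phi x * (\<Sum>d\<in>UNIV. up2 g P a d x * PP d r x) + chi x * (\<Sum>d\<in>UNIV. up2 g P a d x * P d r x)" for r
      by (simp add: ring_distribs sum.distrib sum_distrib_left mult_ac)
    moreover have "(\<Sum>d\<in>UNIV. up2 g P a d x * PP d r x) = 0"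
      and "(\<Sum>d\<in>UNIV. up2 g P a d x * P d r x) = (ginv_mat x ** gmat P x) $ a $ r" for r
      using x by (simp_all add: up2_contract_mat matrix_mul_assoc[symmetric] projector_mat_simps)
    ultimately show ?thesis by (simp only:) (simp add: ginv_mat_nth sum_distrib_left mult_ac)
  qed
  also have "\<dots> = chi x * (\<Sum>s\<in>UNIV. up2 g P a s x * T s b c x)"
    using x by (simp add: contract_assoc matrix_mult_nth[symmetric] up2_mat)
  finally show ?thesis
    using x by (simp add: lie20_up2_P mixup_eq algebra_simps sum_distrib_left sum_subtractf sum_negf)
qed

end

context biconformal_pair
begin

lemma lie12_mixup_PP:
  assumes x: "x \<in> U" and dT: "\<And>d b c. T d b c differentiable (at x)"
    and lie3_T: "\<And>d b c. lie3 xi T d b c x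
      = (\<Sum>r\<in>UNIV. (phi x * PP d r x + chi x * P d r x) * (\<Sum>s\<in>UNIV. ginv g r s x * T s b c x))"
  shows "lie12 xi (mixup g PP T) a b c x = (phi x - chi x) * mixup g PP T a b c x"
  by (rule swap.lie12_mixup_P[OF x dT]) (simp add: lie3_T add.commute)

end

theorem mainTheorem3:
  fixes U :: "(real^'n::finite) set"
    and g P PP :: "'n \<Rightarrow> 'n \<Rightarrow> real^'n \<Rightarrow> real"
    and xi :: "'n \<Rightarrow> real^'n \<Rightarrow> real"
    and phi chi :: "real^'n \<Rightarrow> real"
    and p :: nat
  assumes "metric_on U g"
    and "proj_pair U g P PP"
    and "\<forall>x\<in>U. trace2 g P x = real p"
    and "1 \<le> p" and "p \<le> CARD('n) - 1"
    and "biconformal U P PP xi phi chi"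
  shows "\<forall>x\<in>U.
     (\<forall>a. lie1 xi (Ev g P) a x = - real p * (\<Sum>q\<in>UNIV. PP a q x * grad g phi q x)) \<and>
     (\<forall>a. lie1 xi (Wv g P PP) a x = (real p - real CARD('n)) * (\<Sum>q\<in>UNIV. P a q x * grad g chi q x)) \<and>
     (\<forall>a b c. lie3 xi (Tt g P PP p) a b c x =
        (\<Sum>r\<in>UNIV. (phi x * PP a r x + chi x * P a r x) * (\<Sum>s\<in>UNIV. ginv g r s x * Tt g P PP p s b c x))) \<and>
     (\<forall>a b c. lie12 xi (mixup g P (Tt g P PP p)) a b c x = (chi x - phi x) * mixup g P (Tt g P PP p) a b c x) \<and>
     (\<forall>a b c. lie12 xi (mixup g PP (Tt g P PP p)) a b c x = (phi x - chi x) * mixup g PP (Tt g P PP p) a b c x)"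
proof -
  interpret biconformal_pair U g P PP xi phi chi
    using assms(1,2,6) by unfold_locales
  have p: "0 < p" "p < CARD('n)" using assms(4,5) by linarith+
  have tr: "trace2 g P x = real p" and trPP: "trace2 g PP x = real CARD('n) - real p" if "x \<in> U" for x
    using assms(3) trace2_P_add_PP[OF that] that by auto
  have lie3_T: "lie3 xi (Tt g P PP p) d b c x
      = (\<Sum>r\<in>UNIV. (phi x * PP d r x + chi x * P d r x) * (\<Sum>s\<in>UNIV. ginv g r s x * Tt g P PP p s b c x))"
    if "x \<in> U" for x d b c
    using lie3_Tt[OF that tr[OF that] p] .
  show ?thesis
    using lie1_Ev lie1_Wv tr trPP lie3_T
      lie12_mixup_P[OF _ differentiable_Tt lie3_T] lie12_mixup_PP[OF _ differentiable_Tt lie3_T]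
    by simp
qed

end
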